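(* Let $\mathcal{T}$ be a finite total order, $\mathcal{G}$ a finite grid poset, $S\subseteq\mathcal{T}\times\mathcal{G}$ a spread, $A=\min S$ and $B=\max S$ (so $S=\uparrow A\cap\downarrow B$). Let \[ \mathcal{Q}=\pi_0\big(\{0\}\cup A\cup(A+e_0)\cup(B+e_0)\cup(B+2e_0)\big)\times\mathcal{G}\subseteq\mathcal{T}\times\mathcal{G}, \] where $0$ is the minimum of $\mathcal{T}\times\mathcal{G}$. Then $\mathcal{Q}$ contains $\min S$ and $\operatorname{cover}S$, and, for every spread $R$ such that $\mathbb{k}_R$ is a direct summand of the domain of a minimal spread-radical approximation of $\mathbb{k}_S$, $\mathcal{Q}$ contains $\min R$ and $\operatorname{cover}R$.
   Context: Fix a field $\mathbb{k}$. Identify $\mathcal{T}=[m_0]$, $\mathcal{G}=[m_1]\times\cdots\times[m_n]$ ($[m]=\{0<\dots<m-1\}$), with product order; $\pi_0$ is projection to $\mathcal{T}$. $x+e_0$ replaces the $0$-th coordinate of $x$ by $\min(m_0-1,\pi_0(x)+1)$; $B+2e_0=(B+e_0)+e_0$; $X+e_0=\{x+e_0:x\in X\}$. $\uparrow X,\downarrow X$ are the upset and downset generated by $X$; $\operatorname{cover}X=\min(\uparrow X\setminus X)$. A spread is a nonempty convex zigzag-connected subset; $\mathbb{k}_R$ its indicator representation in $\operatorname{rep}(\mathcal{T}\times\mathcal{G})$ (functors to finite-dimensional vector spaces). In the full subcategory $\mathcal{C}$ of finite direct sums of spread representations, the radical $\operatorname{rad}_\mathcal{C}(X,Y)$ is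 the additive subfunctor of Hom consisting of non-isomorphisms between indecomposables; a minimal spread-radical approximation of $M\in\mathcal{C}$ is a right minimal morphism $\rho:C\to M$, $C\in\mathcal{C}$, such that for every $A'\in\mathcal{C}$ the image of $\operatorname{Hom}(A',C)\to\operatorname{Hom}(A',M)$ equals $\operatorname{rad}_\mathcal{C}(A',M)$. *)

theory Defs
  imports "Jordan_Normal_Form.Matrix"
begin

(* Points of T x G = [m0] x [m1] x ... x [mn] are nat lists of length n+1;
   coordinate 0 is the T-coordinate. ms = [m0, m1, ..., mn]. *)

definition grid :: "nat list \<Rightarrow> nat list set" where
  "grid ms = {x. length x = length ms \<and> (\<forall>i<length ms. x ! i < ms ! i)}"

definition le_pt :: "nat list \<Rightarrow> nat list \<Rightarrow> bool" where
  "le_pt x y \<longleftrightarrow> length x = length y \<and> (\<forall>i<length x. x ! i \<le> y ! i)"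

definition upset :: "nat list \<Rightarrow> nat list set \<Rightarrow> nat list set" where
  "upset ms X = {y \<in> grid ms. \<exists>x\<in>X. le_pt x y}"

definition downset :: "nat list \<Rightarrow> nat list set \<Rightarrow> nat list set" where
  "downset ms X = {y \<in> grid ms. \<exists>x\<in>X. le_pt y x}"

definition minimals :: "nat list set \<Rightarrow> nat list set" where
  "minimals X = {x \<in> X. \<forall>y\<in>X. le_pt y x \<longrightarrow> y = x}"

definition maximals :: "nat list set \<Rightarrow> nat list set" where
  "maximals X = {x \<in> X. \<forall>y\<in>X. le_pt x y \<longrightarrow> y = x}"

definition cover :: "nat list \<Rightarrow> nat list set \<Rightarrow> nat list set" where
  "cover ms X = minimals (upset ms X - X)"

definition plus_e0 :: "nat list \<Rightarrow> nat list \<Rightarrow> nat list" where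
  "plus_e0 ms x = x[0 := min (ms ! 0 - 1) (x ! 0 + 1)]"

definition zero_pt :: "nat list \<Rightarrow> nat list" where
  "zero_pt ms = replicate (length ms) 0"

definition comparable :: "nat list \<Rightarrow> nat list \<Rightarrow> bool" where
  "comparable x y \<longleftrightarrow> le_pt x y \<or> le_pt y x"

definition spread :: "nat list \<Rightarrow> nat list set \<Rightarrow> bool" where
  "spread ms S \<longleftrightarrow> S \<subseteq> grid ms \<and> S \<noteq> {} \<and>
     (\<forall>x\<in>S. \<forall>y\<in>grid ms. \<forall>z\<in>S. le_pt x y \<and> le_pt y z \<longrightarrow> y \<in> S) \<and>
     (\<forall>x\<in>S. \<forall>y\<in>S. (x, y) \<in> ({(a, b). a \<in> S \<and> b \<in> S \<and> comparable a b})\<^sup>*)"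

(* Representations of the poset grid ms over a field: finite-dimensional
   spaces k^(dim x) and structure matrices rmap x y : k^(dim x) -> k^(dim y) *)
record 'a rep =
  rdim :: "nat list \<Rightarrow> nat"
  rmap :: "nat list \<Rightarrow> nat list \<Rightarrow> 'a mat"

definition is_rep :: "nat list \<Rightarrow> 'a::field rep \<Rightarrow> bool" where
  "is_rep ms V \<longleftrightarrow>
     (\<forall>x\<in>grid ms. \<forall>y\<in>grid ms. le_pt x y \<longrightarrow> rmap V x y \<in> carrier_mat (rdim V y) (rdim V x)) \<and>
     (\<forall>x\<in>grid ms. rmap V x x = 1\<^sub>m (rdim V x)) \<and>
     (\<forall>x\<in>grid ms. \<forall>y\<in>grid ms. \<forall>z\<in>grid ms. le_pt x y \<and> le_pt y z \<longrightarrow>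
        rmap V y z * rmap V x y = rmap V x z)"

definition is_hom :: "nat list \<Rightarrow> 'a::field rep \<Rightarrow> 'a rep \<Rightarrow> (nat list \<Rightarrow> 'a mat) \<Rightarrow> bool" where
  "is_hom ms V W f \<longleftrightarrow>
     (\<forall>x\<in>grid ms. f x \<in> carrier_mat (rdim W x) (rdim V x)) \<and>
     (\<forall>x\<in>grid ms. \<forall>y\<in>grid ms. le_pt x y \<longrightarrow> f y * rmap V x y = rmap W x y * f x)"

definition hcomp :: "(nat list \<Rightarrow> 'a::field mat) \<Rightarrow> (nat list \<Rightarrow> 'a mat) \<Rightarrow> nat list \<Rightarrow> 'a mat" where
  "hcomp g f = (\<lambda>x. g x * f x)"

definition is_iso :: "nat list \<Rightarrow> 'a::field rep \<Rightarrow> 'a rep \<Rightarrow> (nat list \<Rightarrow> 'a mat) \<Rightarrow> bool" where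
  "is_iso ms V W f \<longleftrightarrow> is_hom ms V W f \<and>
     (\<exists>g. is_hom ms W V g \<and> (\<forall>x\<in>grid ms. g x * f x = 1\<^sub>m (rdim V x) \<and> f x * g x = 1\<^sub>m (rdim W x)))"

definition zero_rep :: "'a::field rep" where
  "zero_rep = \<lparr>rdim = (\<lambda>x. 0), rmap = (\<lambda>x y. 0\<^sub>m 0 0)\<rparr>"

definition dsum2 :: "'a::field rep \<Rightarrow> 'a rep \<Rightarrow> 'a rep" where
  "dsum2 V W = \<lparr>rdim = (\<lambda>x. rdim V x + rdim W x),
     rmap = (\<lambda>x y. four_block_mat (rmap V x y) (0\<^sub>m (rdim V y) (rdim W x))
                                  (0\<^sub>m (rdim W y) (rdim V x)) (rmap W x y))\<rparr>"

definition dsum_list :: "'a::field rep list \<Rightarrow> 'a rep" where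
  "dsum_list Vs = foldr dsum2 Vs zero_rep"

definition offset :: "'a::field rep list \<Rightarrow> nat \<Rightarrow> nat list \<Rightarrow> nat" where
  "offset Vs i x = sum_list (map (\<lambda>V. rdim V x) (take i Vs))"

(* component (Vs!i) -> (Ws!j) of a morphism dsum_list Vs -> dsum_list Ws *)
definition component :: "'a::field rep list \<Rightarrow> 'a rep list \<Rightarrow> (nat list \<Rightarrow> 'a mat)
    \<Rightarrow> nat \<Rightarrow> nat \<Rightarrow> nat list \<Rightarrow> 'a mat" where
  "component Vs Ws f i j = (\<lambda>x. mat (rdim (Ws ! j) x) (rdim (Vs ! i) x)
       (\<lambda>(a, b). f x $$ (offset Ws j x + a, offset Vs i x + b)))"

definition spread_rep :: "nat list set \<Rightarrow> 'a::field rep" where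
  "spread_rep R = \<lparr>rdim = (\<lambda>x. if x \<in> R then 1 else 0),
     rmap = (\<lambda>x y. if x \<in> R \<and> y \<in> R then 1\<^sub>m 1
                   else 0\<^sub>m (if y \<in> R then 1 else 0) (if x \<in> R then 1 else 0))\<rparr>"

definition spreads_sum :: "nat list set list \<Rightarrow> 'a::field rep" where
  "spreads_sum Rs = dsum_list (map spread_rep Rs)"

definition in_C :: "nat list \<Rightarrow> 'a::field rep \<Rightarrow> bool" where
  "in_C ms V \<longleftrightarrow> is_rep ms V \<and>
     (\<exists>Rs. (\<forall>R\<in>set Rs. spread ms R) \<and> (\<exists>\<alpha>. is_iso ms (spreads_sum Rs) V \<alpha>))"

(* rad_C(X,Y): the additive extension of non-isomorphisms between indecomposables
   (spread representations), computed via decompositions into spread representations *)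
definition in_rad :: "nat list \<Rightarrow> 'a::field rep \<Rightarrow> 'a rep \<Rightarrow> (nat list \<Rightarrow> 'a mat) \<Rightarrow> bool" where
  "in_rad ms X Y f \<longleftrightarrow> in_C ms X \<and> in_C ms Y \<and> is_hom ms X Y f \<and>
     (\<exists>Rs Ss \<alpha> \<beta>. (\<forall>R\<in>set Rs. spread ms R) \<and> (\<forall>S\<in>set Ss. spread ms S) \<and>
        is_iso ms (spreads_sum Rs) X \<alpha> \<and> is_iso ms Y (spreads_sum Ss) \<beta> \<and>
        (\<forall>i<length Rs. \<forall>j<length Ss.
           \<not> is_iso ms (spread_rep (Rs ! i)) (spread_rep (Ss ! j))
               (component (map spread_rep Rs) (map spread_rep Ss) (hcomp \<beta> (hcomp f \<alpha>)) i j)))"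

definition right_minimal :: "nat list \<Rightarrow> 'a::field rep \<Rightarrow> 'a rep \<Rightarrow> (nat list \<Rightarrow> 'a mat) \<Rightarrow> bool" where
  "right_minimal ms C M \<rho> \<longleftrightarrow>
     (\<forall>\<phi>. is_hom ms C C \<phi> \<and> (\<forall>x\<in>grid ms. \<rho> x * \<phi> x = \<rho> x) \<longrightarrow> is_iso ms C C \<phi>)"

definition min_spread_rad_approx :: "nat list \<Rightarrow> 'a::field rep \<Rightarrow> 'a rep \<Rightarrow> (nat list \<Rightarrow> 'a mat) \<Rightarrow> bool" where
  "min_spread_rad_approx ms M C \<rho> \<longleftrightarrow> in_C ms C \<and> is_hom ms C M \<rho> \<and> right_minimal ms C M \<rho> \<and>
     (\<forall>A'. in_C ms A' \<longrightarrow> (\<forall>g. is_hom ms A' M g \<longrightarrow>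
        (in_rad ms A' M g \<longleftrightarrow> (\<exists>h. is_hom ms A' C h \<and> (\<forall>x\<in>grid ms. \<rho> x * h x = g x)))))"

definition direct_summand :: "nat list \<Rightarrow> 'a::field rep \<Rightarrow> 'a rep \<Rightarrow> bool" where
  "direct_summand ms V C \<longleftrightarrow> (\<exists>X \<alpha>. is_rep ms X \<and> is_iso ms (dsum2 V X) C \<alpha>)"

definition Qset :: "nat list \<Rightarrow> nat list set \<Rightarrow> nat list set" where
  "Qset ms S = (let A = minimals S; B = maximals S in
     {x \<in> grid ms. x ! 0 \<in> (\<lambda>p. p ! 0) `
        ({zero_pt ms} \<union> A \<union> plus_e0 ms ` A \<union> plus_e0 ms ` B
         \<union> plus_e0 ms ` plus_e0 ms ` B)})"

end

theory Submission
  imports Defs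
begin

text \<open>
  Call a set of grid points shift-closed if moving a point one step down along \<open>e\<^sub>0\<close> never changes
  membership unless its first coordinate lies in \<open>\<pi>\<^sub>0(\<Q>)\<close>. Minimal elements and covers of a
  shift-closed set then lie in \<open>\<Q>\<close>. The spread \<open>S\<close> is shift-closed, since along \<open>e\<^sub>0\<close> membership
  can only change at \<open>a ! 0\<close> for \<open>a\<close> minimal or at \<open>b ! 0 + 1\<close> for \<open>b\<close> maximal.

  For a summand \<open>\<bbbk>\<^sub>R\<close> of the domain of a minimal radical approximation \<open>\<rho> : C \<rightarrow> \<bbbk>\<^sub>S\<close>, collapse
  every point to the top of its \<open>\<Q>\<close>-block. If \<open>R\<close> were not shift-closed, the map \<open>\<bbbk>\<^sub>R \<rightarrow> C \<rightarrow> \<bbbk>\<^sub>S\<close>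
  would factor through the spreads \<open>\<bbbk>\<^sub>K\<close>, \<open>K\<close> the zigzag components of the preimage of \<open>R\<close>;
  these differ from \<open>S\<close> and from \<open>R\<close>, so the factors lift along \<open>\<rho>\<close>, and the glued lift is killed
  by the retraction \<open>C \<rightarrow> \<bbbk>\<^sub>R\<close> because spread representations are bricks. Right minimality of \<open>\<rho>\<close>
  turns this into a contradiction.
\<close>

section \<open>The product order on grid points\<close>

lemma nth_update_0: "x[0 := t] ! i = (if i = 0 \<and> 0 < length x then t else x ! i)"
  by (cases x; cases i) auto

lemma le_pt_refl [simp]: "le_pt x x"
  by (simp add: le_pt_def)

lemma le_pt_trans: "le_pt x y \<Longrightarrow> le_pt y z \<Longrightarrow> le_pt x z"
  unfolding le_pt_def by (metis order_trans)

lemma le_pt_nth: "le_pt x y \<Longrightarrow> i < length x \<Longrightarrow> x ! i \<le> y ! i"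
  by (simp add: le_pt_def)

lemma le_pt_length: "le_pt x y \<Longrightarrow> length x = length y"
  by (simp add: le_pt_def)

lemma sum_list_less_if_le_pt:
  assumes "le_pt x y" "x \<noteq> y"
  shows "sum_list x < sum_list y"
proof -
  have len: "length x = length y" and le: "\<forall>i\<in>{0..<length x}. x ! i \<le> y ! i"
    using assms(1) by (auto simp: le_pt_def)
  obtain i where "i < length x" "x ! i \<noteq> y ! i"
    using assms(2) len nth_equalityI by blast
  then have "\<exists>i\<in>{0..<length x}. x ! i < y ! i"
    using le by (auto simp: order_less_le)
  then have "(\<Sum>i = 0..<length x. x ! i) < (\<Sum>i = 0..<length x. y ! i)"
    by (rule sum_strict_mono_ex1[OF finite_atLeastLessThan le])
  then show ?thesis
    using len by (simp add: sum_list_sum_nth)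
qed

lemma minimals_subset: "minimals X \<subseteq> X"
  by (auto simp: minimals_def)

lemma maximals_subset: "maximals X \<subseteq> X"
  by (auto simp: maximals_def)

lemma ex_minimal_below:
  assumes "x \<in> X"
  shows "\<exists>a\<in>minimals X. le_pt a x"
proof -
  let ?P = "\<lambda>y. y \<in> X \<and> le_pt y x"
  obtain a where a: "?P a" and least: "\<And>y. ?P y \<Longrightarrow> sum_list a \<le> sum_list y"
    using ex_has_least_nat[of ?P x sum_list] assms by auto
  have "a \<in> minimals X"
    unfolding minimals_def
  proof (intro CollectI conjI ballI impI)
    fix y assume "y \<in> X" "le_pt y a"
    with a least[of y] show "y = a"
      by (metis le_pt_trans not_less sum_list_less_if_le_pt)
  qed (use a in simp)
  with a show ?thesis by blast
qed

lemma ex_maximal_above: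
  assumes "x \<in> X" "X \<subseteq> grid ms"
  shows "\<exists>b\<in>maximals X. le_pt x b"
proof -
  have bounded: "sum_list y \<le> sum_list ms" if "y \<in> X" for y
  proof -
    have "le_pt y ms"
      using that assms(2) by (auto simp: grid_def le_pt_def less_imp_le)
    then show ?thesis
      by (metis order.order_iff_strict sum_list_less_if_le_pt)
  qed
  let ?P = "\<lambda>y. y \<in> X \<and> le_pt x y"
  obtain b where b: "?P b"
    and least: "\<And>y. ?P y \<Longrightarrow> sum_list ms - sum_list b \<le> sum_list ms - sum_list y"
    using ex_has_least_nat[of ?P x "\<lambda>y. sum_list ms - sum_list y"] assms by auto
  have "b \<in> maximals X"
    unfolding maximals_def
  proof (intro CollectI conjI ballI impI)
    fix y assume "y \<in> X" "le_pt b y"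
    with b least[of y] bounded[of y] show "y = b"
      by (metis diff_less_mono2 le_pt_trans not_less order.strict_trans2 sum_list_less_if_le_pt)
  qed (use b in simp)
  with b show ?thesis by blast
qed

lemma grid_length: "x \<in> grid ms \<Longrightarrow> length x = length ms"
  by (simp add: grid_def)

lemma grid_nth_0_less: "x \<in> grid ms \<Longrightarrow> ms \<noteq> [] \<Longrightarrow> x ! 0 < ms ! 0"
  by (simp add: grid_def)

lemma grid_update_0: "x \<in> grid ms \<Longrightarrow> t < ms ! 0 \<Longrightarrow> x[0 := t] \<in> grid ms"
  by (auto simp: grid_def nth_update_0)

lemma le_pt_update_0: "le_pt x y \<Longrightarrow> s \<le> t \<Longrightarrow> le_pt (x[0 := s]) (y[0 := t])"
  by (auto simp: le_pt_def nth_update_0)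

lemma le_pt_update_0_left: "le_pt x y \<Longrightarrow> s \<le> y ! 0 \<Longrightarrow> le_pt (x[0 := s]) y"
  by (auto simp: le_pt_def nth_update_0)

lemma le_pt_update_0_right: "le_pt x y \<Longrightarrow> x ! 0 \<le> t \<Longrightarrow> 0 < length y \<Longrightarrow> le_pt x (y[0 := t])"
  by (auto simp: le_pt_def nth_update_0)

lemma spread_subset_grid: "spread ms X \<Longrightarrow> X \<subseteq> grid ms"
  unfolding spread_def by blast

lemma spread_convex:
  "spread ms X \<Longrightarrow> a \<in> X \<Longrightarrow> b \<in> X \<Longrightarrow> y \<in> grid ms \<Longrightarrow> le_pt a y \<Longrightarrow> le_pt y b \<Longrightarrow> y \<in> X"
  unfolding spread_def by blast

definition comparable_rel :: "nat list set \<Rightarrow> (nat list \<times> nat list) set" where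
  "comparable_rel X = {(a, b). a \<in> X \<and> b \<in> X \<and> comparable a b}"

definition conn_component :: "nat list set \<Rightarrow> nat list \<Rightarrow> nat list set" where
  "conn_component X p = {y. (p, y) \<in> (comparable_rel X)\<^sup>*}"

lemma comparable_if_le_pt: "le_pt x y \<Longrightarrow> comparable x y" "le_pt x y \<Longrightarrow> comparable y x"
  by (simp_all add: comparable_def)

lemma spread_connected: "spread ms X \<Longrightarrow> x \<in> X \<Longrightarrow> y \<in> X \<Longrightarrow> (x, y) \<in> (comparable_rel X)\<^sup>*"
  unfolding spread_def comparable_rel_def by blast

lemma comparable_rel_rtrancl_sym: "(a, b) \<in> (comparable_rel X)\<^sup>* \<Longrightarrow> (b, a) \<in> (comparable_rel X)\<^sup>*"
proof -
  have "sym (comparable_rel X)"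
    unfolding comparable_rel_def sym_def by (auto simp: comparable_def)
  then show "(a, b) \<in> (comparable_rel X)\<^sup>* \<Longrightarrow> (b, a) \<in> (comparable_rel X)\<^sup>*"
    using sym_rtrancl by (meson symD)
qed

lemma self_in_conn_component: "p \<in> conn_component X p"
  by (simp add: conn_component_def)

lemma conn_component_subset: "p \<in> X \<Longrightarrow> conn_component X p \<subseteq> X"
  unfolding conn_component_def comparable_rel_def by (auto elim: rtranclE)

lemma conn_component_closed:
  assumes "y \<in> conn_component X p" "z \<in> X" "comparable y z" "p \<in> X"
  shows "z \<in> conn_component X p"
proof -
  have "y \<in> X"
    using assms(1,4) conn_component_subset by blast
  with assms have "(y, z) \<in> comparable_rel X"
    by (simp add: comparable_rel_def)
  with assms(1) show ?thesis
    unfolding conn_component_def by (simp add: rtrancl_into_rtrancl)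
qed

lemma conn_component_eq: "q \<in> conn_component X p \<Longrightarrow> conn_component X q = conn_component X p"
  unfolding conn_component_def
  by (auto intro: rtrancl_trans dest: comparable_rel_rtrancl_sym)

lemma conn_component_connected:
  assumes "y \<in> conn_component X p"
  shows "(p, y) \<in> (comparable_rel (conn_component X p))\<^sup>*"
proof -
  have "(p, y) \<in> (comparable_rel X)\<^sup>*"
    using assms by (simp add: conn_component_def)
  then show ?thesis
  proof (induction rule: rtrancl_induct)
    case (step y z)
    then have "(y, z) \<in> comparable_rel (conn_component X p)"
      by (auto simp: conn_component_def comparable_rel_def intro: rtrancl_into_rtrancl)
    with step.IH show ?case
      by (rule rtrancl_into_rtrancl)
  qed simp
qed

lemma spread_conn_component:
  assumes sub: "X \<subseteq> grid ms"
    and convex: "\<And>x y z. x \<in> X \<Longrightarrow> z \<in> X \<Longrightarrow> y \<in> grid ms \<Longrightarrow> le_pt x y \<Longrightarrow> le_pt y z \<Longrightarrow> y \<in> X"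
    and p: "p \<in> X"
  shows "spread ms (conn_component X p)"
  unfolding spread_def
proof (intro conjI ballI impI)
  show "conn_component X p \<subseteq> grid ms" "conn_component X p \<noteq> {}"
    using conn_component_subset[OF p] sub self_in_conn_component by blast+
next
  fix x y z
  assume x: "x \<in> conn_component X p" and "y \<in> grid ms" and z: "z \<in> conn_component X p"
    and "le_pt x y \<and> le_pt y z"
  with convex have "y \<in> X"
    using conn_component_subset[OF p] by blast
  with x show "y \<in> conn_component X p"
    using conn_component_closed comparable_if_le_pt \<open>le_pt x y \<and> le_pt y z\<close> p by blast
next
  fix x y
  assume "x \<in> conn_component X p" "y \<in> conn_component X p"
  then have "(x, p) \<in> (comparable_rel (conn_component X p))\<^sup>*"
    and "(p, y) \<in> (comparable_rel (conn_component X p))\<^sup>*"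
    using conn_component_connected comparable_rel_rtrancl_sym by blast+
  then show "(x, y) \<in> {(a, b). a \<in> conn_component X p \<and> b \<in> conn_component X p \<and> comparable a b}\<^sup>*"
    unfolding comparable_rel_def[symmetric] by (rule rtrancl_trans)
qed

lemma rtrancl_leaves_set:
  assumes "(a, b) \<in> r\<^sup>*" "a \<in> P" "b \<notin> P"
  shows "\<exists>x y. (x, y) \<in> r \<and> x \<in> P \<and> y \<notin> P"
  using assms by (induction rule: rtrancl_induct) blast+

lemma nat_ex_last_true:
  assumes "P lo" "\<not> P hi" "lo \<le> hi"
  shows "\<exists>t. lo \<le> t \<and> t < hi \<and> P t \<and> \<not> P (Suc t)"
  using assms
proof (induction hi)
  case (Suc h)
  then have "lo \<le> h"
    by (metis le_Suc_eq)
  show ?case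
  proof (cases "P h")
    case True
    with Suc.prems \<open>lo \<le> h\<close> show ?thesis by blast
  next
    case False
    with Suc \<open>lo \<le> h\<close> show ?thesis by (meson less_SucI)
  qed
qed simp

section \<open>Sets closed under shifting along the first coordinate\<close>

definition shift_closed :: "nat list \<Rightarrow> nat set \<Rightarrow> nat list set \<Rightarrow> bool" where
  "shift_closed ms P X \<longleftrightarrow> (\<forall>x\<in>grid ms. x ! 0 \<notin> P \<longrightarrow> (x \<in> X \<longleftrightarrow> x[0 := x ! 0 - 1] \<in> X))"

lemma shift_closedD:
  "shift_closed ms P X \<Longrightarrow> x \<in> grid ms \<Longrightarrow> x ! 0 \<notin> P \<Longrightarrow> x \<in> X \<longleftrightarrow> x[0 := x ! 0 - 1] \<in> X"
  unfolding shift_closed_def by blast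

lemma update_0_pred_neq:
  assumes "x \<in> grid ms" "ms \<noteq> []" "x ! 0 \<noteq> 0"
  shows "x[0 := x ! 0 - 1] \<noteq> x"
proof
  assume "x[0 := x ! 0 - 1] = x"
  then have "x[0 := x ! 0 - 1] ! 0 = x ! 0"
    by simp
  moreover have "0 < length x"
    using grid_length[OF assms(1)] assms(2) by simp
  ultimately show False
    using assms(3) by simp
qed

lemma shift_closed_minimals:
  assumes ms: "ms \<noteq> []" and "0 \<in> P" "X \<subseteq> grid ms" "shift_closed ms P X"
    and m: "m \<in> minimals X"
  shows "m ! 0 \<in> P"
proof (rule ccontr)
  assume not_P: "m ! 0 \<notin> P"
  let ?m' = "m[0 := m ! 0 - 1]"
  have "m \<in> X" and mg: "m \<in> grid ms"
    using m assms(3) by (auto simp: minimals_def)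
  then have "?m' \<in> X" "le_pt ?m' m"
    using shift_closedD[OF assms(4) mg not_P] le_pt_update_0_left[OF le_pt_refl] by auto
  moreover have "?m' \<noteq> m"
    using update_0_pred_neq[OF mg ms] not_P \<open>0 \<in> P\<close> by metis
  ultimately show False
    using m unfolding minimals_def by blast
qed

lemma shift_closed_cover:
  assumes ms: "ms \<noteq> []" and "0 \<in> P" "X \<subseteq> grid ms" and closed: "shift_closed ms P X"
    and y: "y \<in> cover ms X"
  shows "y ! 0 \<in> P"
proof (rule ccontr)
  assume not_P: "y ! 0 \<notin> P"
  let ?y' = "y[0 := y ! 0 - 1]"
  have "y \<in> upset ms X" "y \<notin> X" and least: "\<And>z. z \<in> upset ms X - X \<Longrightarrow> le_pt z y \<Longrightarrow> z = y"
    using y by (auto simp: cover_def minimals_def)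
  then obtain x where x: "x \<in> X" "le_pt x y" and yg: "y \<in> grid ms"
    by (auto simp: upset_def)
  have y_pos: "0 < length y"
    using grid_length[OF yg] ms by simp
  have y'g: "?y' \<in> grid ms"
    using grid_update_0[OF yg] grid_nth_0_less[OF yg ms] by simp
  have "?y' \<notin> X"
    using shift_closedD[OF closed yg not_P] \<open>y \<notin> X\<close> by blast
  moreover have "\<exists>z\<in>X. le_pt z ?y'"
  proof (cases "x ! 0 < y ! 0")
    case True
    then have "le_pt x ?y'"
      using x(2) y_pos by (intro le_pt_update_0_right) auto
    with x(1) show ?thesis by blast
  next
    case False
    then have same: "x ! 0 = y ! 0"
      using le_pt_nth[OF x(2)] le_pt_length[OF x(2)] y_pos by (metis le_neq_implies_less)
    have "x \<in> grid ms"
      using x(1) assms(3) by blast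
    then have "x[0 := x ! 0 - 1] \<in> X"
      using shift_closedD[OF closed] not_P same x(1) by metis
    moreover have "le_pt (x[0 := x ! 0 - 1]) ?y'"
      using x(2) same by (intro le_pt_update_0) auto
    ultimately show ?thesis by blast
  qed
  ultimately have "?y' \<in> upset ms X - X"
    using y'g by (auto simp: upset_def)
  moreover have "?y' \<noteq> y"
    using update_0_pred_neq[OF yg ms] not_P \<open>0 \<in> P\<close> by metis
  moreover have "le_pt ?y' y"
    by (rule le_pt_update_0_left) simp_all
  ultimately show False
    using least by blast
qed

definition Qcoords :: "nat list \<Rightarrow> nat list set \<Rightarrow> nat set" where
  "Qcoords ms S = (\<lambda>p. p ! 0) ` ({zero_pt ms} \<union> minimals S \<union> plus_e0 ms ` minimals S
     \<union> plus_e0 ms ` maximals S \<union> plus_e0 ms ` plus_e0 ms ` maximals S)"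

lemma Qset_eq: "Qset ms S = {x \<in> grid ms. x ! 0 \<in> Qcoords ms S}"
  by (simp add: Qset_def Qcoords_def Let_def)

lemma zero_in_Qcoords: "ms \<noteq> [] \<Longrightarrow> 0 \<in> Qcoords ms S"
  unfolding Qcoords_def by (rule image_eqI[of _ _ "zero_pt ms"]) (auto simp: zero_pt_def)

lemma shift_closed_Qset:
  assumes "ms \<noteq> []" "X \<subseteq> grid ms" "shift_closed ms (Qcoords ms S) X"
  shows "minimals X \<subseteq> Qset ms S \<and> cover ms X \<subseteq> Qset ms S"
proof -
  have "minimals X \<subseteq> grid ms" "cover ms X \<subseteq> grid ms"
    using assms(2) minimals_subset[of X] minimals_subset[of "upset ms X - X"]
    unfolding cover_def upset_def by blast+
  then show ?thesis
    using shift_closed_minimals[OF assms(1) zero_in_Qcoords[OF assms(1)] assms(2,3)]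
      shift_closed_cover[OF assms(1) zero_in_Qcoords[OF assms(1)] assms(2,3)]
    by (auto simp: Qset_eq)
qed

lemma plus_e0_nth_0: "x \<in> grid ms \<Longrightarrow> ms \<noteq> [] \<Longrightarrow> plus_e0 ms x ! 0 = min (ms ! 0 - 1) (x ! 0 + 1)"
  unfolding plus_e0_def using grid_length[of x ms] by (simp add: nth_update_0)

lemma plus_e0_grid:
  assumes "x \<in> grid ms" "ms \<noteq> []"
  shows "plus_e0 ms x \<in> grid ms"
proof -
  have "0 < ms ! 0"
    using grid_nth_0_less[OF assms] by simp
  then show ?thesis
    unfolding plus_e0_def using assms(1) by (intro grid_update_0) auto
qed

lemma zero_pt_grid:
  assumes S: "spread ms S"
  shows "zero_pt ms \<in> grid ms"
proof -
  obtain s where "s \<in> grid ms"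
    using S by (auto simp: spread_def)
  then have "\<forall>i<length ms. 0 < ms ! i"
    unfolding grid_def by (metis (mono_tags, lifting) gr_zeroI mem_Collect_eq not_less0)
  then show ?thesis
    by (simp add: grid_def zero_pt_def)
qed

lemma Qcoords_bound:
  assumes ms: "ms \<noteq> []" and S: "spread ms S"
  shows "Qcoords ms S \<subseteq> {..<ms ! 0}"
  unfolding Qcoords_def
proof (rule image_subsetI)
  have image_grid: "A \<subseteq> grid ms \<Longrightarrow> plus_e0 ms ` A \<subseteq> grid ms" for A
    using plus_e0_grid[OF _ ms] by blast
  have min: "minimals S \<subseteq> grid ms" and max: "maximals S \<subseteq> grid ms"
    using spread_subset_grid[OF S] minimals_subset maximals_subset by blast+
  fix p
  assume "p \<in> {zero_pt ms} \<union> minimals S \<union> plus_e0 ms ` minimals S \<union> plus_e0 ms ` maximals S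
     \<union> plus_e0 ms ` plus_e0 ms ` maximals S"
  then have "p \<in> grid ms"
    using zero_pt_grid[OF S] min image_grid[OF min] image_grid[OF max] image_grid[OF image_grid[OF max]]
    by (elim UnE) auto
  then show "p ! 0 \<in> {..<ms ! 0}"
    using grid_nth_0_less[OF _ ms] by simp
qed

section \<open>Collapsing the first coordinate onto blocks\<close>

text \<open>The cuts \<open>P\<close> split \<open>{..<m0}\<close> into blocks \<open>[q, q')\<close> of consecutive elements of \<open>P \<union> {m0}\<close>;
  \<open>collapse\<close> moves a point to the top of the block of its first coordinate.\<close>

locale coord_blocks =
  fixes ms :: "nat list" and P :: "nat set"
  assumes ms_ne: "ms \<noteq> []" and zero_in_P: "0 \<in> P" and P_bound: "P \<subseteq> {..<ms ! 0}"
begin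

abbreviation m0 :: nat where "m0 \<equiv> ms ! 0"

definition next_cut :: "nat \<Rightarrow> nat" where
  "next_cut t = (if \<exists>q\<in>P. t < q then Min {q\<in>P. t < q} else m0)"

definition block_top :: "nat \<Rightarrow> nat" where
  "block_top t = next_cut t - 1"

definition collapse :: "nat list \<Rightarrow> nat list" where
  "collapse x = x[0 := block_top (x ! 0)]"

definition saturated :: "nat list set \<Rightarrow> bool" where
  "saturated X \<longleftrightarrow> (\<forall>x\<in>grid ms. x \<in> X \<longleftrightarrow> collapse x \<in> X)"

definition collapse_preimage :: "nat list set \<Rightarrow> nat list set" where
  "collapse_preimage R = {x \<in> grid ms. collapse x \<in> R}"

lemma m0_pos: "0 < m0"
  using zero_in_P P_bound by auto

lemma next_cut_le: "q \<in> P \<Longrightarrow> t < q \<Longrightarrow> next_cut t \<le> q"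
proof -
  have "finite {q \<in> P. t < q}"
    using P_bound finite_subset by fastforce
  then show "q \<in> P \<Longrightarrow> t < q \<Longrightarrow> next_cut t \<le> q"
    by (auto simp: next_cut_def)
qed

lemma next_cut_cases: "t < next_cut t \<and> next_cut t \<in> P \<or> next_cut t = m0"
proof (cases "\<exists>q\<in>P. t < q")
  case True
  then have "{q \<in> P. t < q} \<noteq> {}" and "finite {q \<in> P. t < q}"
    using P_bound finite_subset by fastforce+
  then have "Min {q \<in> P. t < q} \<in> {q \<in> P. t < q}"
    by (rule Min_in[rotated])
  with True show ?thesis
    by (simp add: next_cut_def)
qed (simp add: next_cut_def)

lemma less_next_cut: "t < m0 \<Longrightarrow> t < next_cut t"
  using next_cut_cases[of t] by auto

lemma next_cut_le_m0: "next_cut t \<le> m0"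
  using next_cut_cases[of t] P_bound by auto

lemma next_cut_mono: "t \<le> t' \<Longrightarrow> t' < m0 \<Longrightarrow> next_cut t \<le> next_cut t'"
  using next_cut_cases[of t'] less_next_cut[of t'] next_cut_le[of "next_cut t'" t] next_cut_le_m0[of t]
  by auto

lemma le_block_top: "t < m0 \<Longrightarrow> t \<le> block_top t"
  using less_next_cut[of t] by (simp add: block_top_def)

lemma block_top_less: "block_top t < m0"
  using next_cut_le_m0[of t] m0_pos by (simp add: block_top_def)

lemma block_top_mono: "t \<le> t' \<Longrightarrow> t' < m0 \<Longrightarrow> block_top t \<le> block_top t'"
  using next_cut_mono by (simp add: block_top_def diff_le_mono)

lemma not_in_P_below_block_top: "t < s \<Longrightarrow> s \<le> block_top t \<Longrightarrow> s \<notin> P"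
  using next_cut_le[of s t] by (auto simp: block_top_def)

lemma block_top_idem:
  assumes "t < m0"
  shows "block_top (block_top t) = block_top t"
proof -
  have "next_cut (block_top t) \<le> next_cut t"
    using next_cut_cases[of t] next_cut_le[of "next_cut t" "block_top t"] next_cut_le_m0
    by (auto simp: block_top_def)
  moreover have "block_top t < next_cut (block_top t)"
    using less_next_cut[OF block_top_less] .
  moreover have "t < next_cut t"
    using less_next_cut[OF assms] .
  ultimately show ?thesis
    by (simp add: block_top_def)
qed

lemma block_top_eq_self: "t < m0 \<Longrightarrow> t + 1 \<in> P \<or> t + 1 = m0 \<Longrightarrow> block_top t = t"
  using less_next_cut[of t] next_cut_le[of "t + 1" t] next_cut_le_m0[of t]
  by (auto simp: block_top_def)

lemma block_top_pred:
  assumes "0 < s" "s < m0" "s \<notin> P"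
  shows "block_top (s - 1) = block_top s"
proof -
  have "next_cut (s - 1) \<noteq> s"
    using next_cut_cases[of "s - 1"] assms by auto
  moreover have "s - 1 < next_cut (s - 1)"
    using less_next_cut[of "s - 1"] assms by simp
  ultimately have "s < next_cut (s - 1)"
    by arith
  then have "next_cut s \<le> next_cut (s - 1)"
    using next_cut_cases[of "s - 1"] next_cut_le next_cut_le_m0 by metis
  moreover have "next_cut (s - 1) \<le> next_cut s"
    using next_cut_mono[of "s - 1" s] assms by simp
  ultimately show ?thesis
    by (simp add: block_top_def)
qed

lemma grid_length_pos: "x \<in> grid ms \<Longrightarrow> 0 < length x"
  using ms_ne grid_length by fastforce

lemma collapse_grid: "x \<in> grid ms \<Longrightarrow> collapse x \<in> grid ms"
  unfolding collapse_def by (rule grid_update_0) (auto simp: block_top_less)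

lemma le_pt_collapse: "x \<in> grid ms \<Longrightarrow> le_pt x (collapse x)"
  unfolding collapse_def using grid_length_pos grid_nth_0_less[OF _ ms_ne] le_block_top
  by (intro le_pt_update_0_right) auto

lemma collapse_mono:
  assumes "x \<in> grid ms" "y \<in> grid ms" "le_pt x y"
  shows "le_pt (collapse x) (collapse y)"
proof -
  have "x ! 0 \<le> y ! 0"
    using le_pt_nth[OF assms(3)] grid_length_pos[OF assms(1)] by simp
  then have "block_top (x ! 0) \<le> block_top (y ! 0)"
    using block_top_mono grid_nth_0_less[OF assms(2) ms_ne] by blast
  with assms(3) show ?thesis
    unfolding collapse_def by (rule le_pt_update_0)
qed

lemma collapse_idem: "x \<in> grid ms \<Longrightarrow> collapse (collapse x) = collapse x"
  unfolding collapse_def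
  using grid_length_pos grid_nth_0_less[OF _ ms_ne] block_top_idem by (simp add: nth_update_0)

lemma collapse_update_pred:
  assumes "x \<in> grid ms" "x ! 0 \<notin> P"
  shows "collapse (x[0 := x ! 0 - 1]) = collapse x"
proof -
  have "x ! 0 \<noteq> 0"
    using assms(2) zero_in_P by metis
  then have "block_top (x ! 0 - 1) = block_top (x ! 0)"
    using block_top_pred assms grid_nth_0_less[OF _ ms_ne] by simp
  then show ?thesis
    unfolding collapse_def using grid_length_pos[OF assms(1)] by (simp add: nth_update_0)
qed

lemma collapse_eq_self: "x \<in> grid ms \<Longrightarrow> x ! 0 + 1 \<in> P \<or> x ! 0 + 1 = m0 \<Longrightarrow> collapse x = x"
  unfolding collapse_def using block_top_eq_self grid_nth_0_less[OF _ ms_ne] by simp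

text \<open>The shifts between \<open>x\<close> and \<open>collapse x\<close> cross no cut.\<close>

lemma shift_closed_mem_collapse_iff:
  assumes closed: "shift_closed ms P X" and xg: "x \<in> grid ms"
  shows "collapse x \<in> X \<longleftrightarrow> x \<in> X"
proof -
  have "x ! 0 + d \<le> block_top (x ! 0) \<Longrightarrow> x[0 := x ! 0 + d] \<in> X \<longleftrightarrow> x \<in> X" for d
  proof (induction d)
    case (Suc d)
    let ?s = "x ! 0 + Suc d"
    let ?z = "x[0 := ?s]"
    have "?s \<notin> P"
      using not_in_P_below_block_top[of "x ! 0" ?s] Suc.prems by simp
    moreover have zg: "?z \<in> grid ms"
      using grid_update_0[OF xg] Suc.prems block_top_less[of "x ! 0"] by simp
    moreover have "?z ! 0 = ?s"
      using grid_length_pos[OF xg] by (simp add: nth_update_0)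
    ultimately have "?z \<in> X \<longleftrightarrow> x[0 := x ! 0 + d] \<in> X"
      using shift_closedD[OF closed zg] by simp
    with Suc show ?case
      by simp
  qed simp
  from this[of "block_top (x ! 0) - x ! 0"] show ?thesis
    using le_block_top[OF grid_nth_0_less[OF xg ms_ne]] by (simp add: collapse_def)
qed

lemma shift_closed_iff_saturated: "shift_closed ms P X \<longleftrightarrow> saturated X"
proof
  show "shift_closed ms P X \<Longrightarrow> saturated X"
    using shift_closed_mem_collapse_iff unfolding saturated_def by blast
next
  assume sat: "saturated X"
  show "shift_closed ms P X"
    unfolding shift_closed_def
  proof (intro ballI impI)
    fix x assume xg: "x \<in> grid ms" and not_P: "x ! 0 \<notin> P"
    then have "x[0 := x ! 0 - 1] \<in> grid ms"
      using grid_update_0 grid_nth_0_less[OF xg ms_ne] by simp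
    then show "x \<in> X \<longleftrightarrow> x[0 := x ! 0 - 1] \<in> X"
      using sat xg collapse_update_pred[OF xg not_P] unfolding saturated_def by metis
  qed
qed

lemma collapse_preimage_convex:
  assumes R: "spread ms R" and x: "x \<in> collapse_preimage R" and z: "z \<in> collapse_preimage R"
    and y: "y \<in> grid ms" and "le_pt x y" "le_pt y z"
  shows "y \<in> collapse_preimage R"
proof -
  have "x \<in> grid ms" "z \<in> grid ms" "collapse x \<in> R" "collapse z \<in> R"
    using x z by (auto simp: collapse_preimage_def)
  moreover have "le_pt (collapse x) (collapse y)" "le_pt (collapse y) (collapse z)"
    using collapse_mono y assms(5,6) calculation(1,2) by blast+
  ultimately have "collapse y \<in> R"
    using spread_convex[OF R _ _ collapse_grid[OF y]] by blast
  with y show ?thesis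
    by (simp add: collapse_preimage_def)
qed

lemma spread_component_preimage:
  assumes "spread ms R" "p \<in> collapse_preimage R"
  shows "spread ms (conn_component (collapse_preimage R) p)"
proof (rule spread_conn_component[OF _ _ assms(2)])
  show "collapse_preimage R \<subseteq> grid ms"
    by (auto simp: collapse_preimage_def)
qed (rule collapse_preimage_convex[OF assms(1)])

lemma saturated_component_preimage:
  assumes p: "p \<in> collapse_preimage R"
  shows "saturated (conn_component (collapse_preimage R) p)"
  unfolding saturated_def
proof (intro ballI iffI)
  fix x assume xg: "x \<in> grid ms"
  have iff: "x \<in> collapse_preimage R \<longleftrightarrow> collapse x \<in> collapse_preimage R"
    using xg collapse_grid[OF xg] collapse_idem[OF xg] by (simp add: collapse_preimage_def)
  show "collapse x \<in> conn_component (collapse_preimage R) p"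
    if "x \<in> conn_component (collapse_preimage R) p"
    using that iff conn_component_subset[OF p] conn_component_closed[OF that _ _ p]
      comparable_if_le_pt(1)[OF le_pt_collapse[OF xg]] by blast
  show "x \<in> conn_component (collapse_preimage R) p"
    if "collapse x \<in> conn_component (collapse_preimage R) p"
    using that iff conn_component_subset[OF p] conn_component_closed[OF that _ _ p]
      comparable_if_le_pt(2)[OF le_pt_collapse[OF xg]] by blast
qed

lemma component_preimage_up:
  assumes R: "spread ms R" and p: "p \<in> collapse_preimage R"
    and "x \<in> R" "y \<in> conn_component (collapse_preimage R) p" "le_pt x y"
  shows "y \<in> R"
proof -
  have "y \<in> grid ms" "collapse y \<in> R"
    using conn_component_subset[OF p] assms(4) by (auto simp: collapse_preimage_def)
  then show ?thesis
    using spread_convex[OF R \<open>x \<in> R\<close>] le_pt_collapse assms(5) by blast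
qed

lemma component_preimage_down:
  assumes R: "spread ms R" and p: "p \<in> collapse_preimage R"
    and "x \<in> R" "y \<in> R" "y \<in> conn_component (collapse_preimage R) p" "le_pt x y"
  shows "x \<in> conn_component (collapse_preimage R) p"
proof -
  have xg: "x \<in> grid ms" and yg: "y \<in> grid ms"
    using assms(3,4) spread_subset_grid[OF R] by blast+
  have "collapse y \<in> R"
    using conn_component_subset[OF p] assms(5) by (auto simp: collapse_preimage_def)
  then have "collapse x \<in> R"
    using spread_convex[OF R \<open>x \<in> R\<close> _ collapse_grid[OF xg]] le_pt_collapse[OF xg]
      collapse_mono[OF xg yg assms(6)] by blast
  then have "x \<in> collapse_preimage R"
    using xg by (simp add: collapse_preimage_def)
  then show ?thesis
    using conn_component_closed[OF assms(5) _ _ p] comparable_if_le_pt(2)[OF assms(6)] by blast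
qed

end

section \<open>The blocks cut out by \<open>\<Q>\<close>\<close>

locale spread_setting = coord_blocks ms "Qcoords ms S" for ms S +
  assumes spread_S: "spread ms S"

lemma spread_settingI: "ms \<noteq> [] \<Longrightarrow> spread ms S \<Longrightarrow> spread_setting ms S"
  by unfold_locales (simp_all add: zero_in_Qcoords Qcoords_bound)

context spread_setting
begin

abbreviation Q :: "nat set" where "Q \<equiv> Qcoords ms S"

lemma S_subset_grid: "S \<subseteq> grid ms"
  using spread_S spread_subset_grid by blast

lemma minimal_nth_0_in_Q: "a \<in> minimals S \<Longrightarrow> a ! 0 \<in> Q"
  unfolding Qcoords_def by blast

lemma plus_e0_nth_0_Suc: "x \<in> S \<Longrightarrow> x ! 0 + 1 < m0 \<Longrightarrow> plus_e0 ms x ! 0 = x ! 0 + 1"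
  using plus_e0_nth_0[OF _ ms_ne] S_subset_grid by auto

lemma minimal_Suc_in_Q:
  assumes a: "a \<in> minimals S" and "a ! 0 + 1 < m0"
  shows "a ! 0 + 1 \<in> Q"
proof -
  have "plus_e0 ms a ! 0 \<in> Q"
    using a unfolding Qcoords_def by blast
  then show ?thesis
    using plus_e0_nth_0_Suc[of a] a minimals_subset[of S] assms(2) by auto
qed

lemma maximal_Suc_in_Q:
  assumes b: "b \<in> maximals S" and "b ! 0 + 1 < m0"
  shows "b ! 0 + 1 \<in> Q"
proof -
  have "plus_e0 ms b ! 0 \<in> Q"
    using b unfolding Qcoords_def by blast
  then show ?thesis
    using plus_e0_nth_0_Suc[of b] b maximals_subset[of S] assms(2) by auto
qed

lemma maximal_Suc_Suc_in_Q:
  assumes b: "b \<in> maximals S" and "b ! 0 + 2 < m0"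
  shows "b ! 0 + 2 \<in> Q"
proof -
  have bg: "b \<in> grid ms"
    using b maximals_subset S_subset_grid by blast
  have "plus_e0 ms b ! 0 = b ! 0 + 1"
    using plus_e0_nth_0[OF bg ms_ne] assms(2) by simp
  then have "plus_e0 ms (plus_e0 ms b) ! 0 = b ! 0 + 2"
    using plus_e0_nth_0[OF plus_e0_grid[OF bg ms_ne] ms_ne] assms(2) by simp
  moreover have "plus_e0 ms (plus_e0 ms b) ! 0 \<in> Q"
    using b unfolding Qcoords_def by blast
  ultimately show ?thesis
    by simp
qed

text \<open>Both directions use convexity between a minimal element below and a maximal element above;
  the cuts \<open>a ! 0\<close> and \<open>b ! 0 + 1\<close> are in \<open>\<Q>\<close>.\<close>

lemma shift_pred_mem_S:
  assumes xS: "x \<in> S" and not_Q: "x ! 0 \<notin> Q"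
  shows "x[0 := x ! 0 - 1] \<in> S"
proof -
  have xg: "x \<in> grid ms"
    using xS S_subset_grid by blast
  have x_pos: "0 < length x"
    using grid_length_pos[OF xg] .
  obtain a where a: "a \<in> minimals S" "le_pt a x"
    using ex_minimal_below[OF xS] by blast
  obtain b where b: "b \<in> maximals S" "le_pt x b"
    using ex_maximal_above[OF xS S_subset_grid] by blast
  have "a ! 0 \<noteq> x ! 0"
    using minimal_nth_0_in_Q[OF a(1)] not_Q by metis
  moreover have "a ! 0 \<le> x ! 0"
    using le_pt_nth[OF a(2)] le_pt_length[OF a(2)] x_pos by simp
  ultimately have "le_pt a (x[0 := x ! 0 - 1])"
    using a(2) x_pos by (intro le_pt_update_0_right) auto
  moreover have "le_pt (x[0 := x ! 0 - 1]) b"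
    using b(2) le_pt_nth[OF b(2), of 0] x_pos by (intro le_pt_update_0_left) auto
  moreover have "x[0 := x ! 0 - 1] \<in> grid ms"
    using grid_update_0[OF xg] grid_nth_0_less[OF xg ms_ne] by simp
  ultimately show ?thesis
    using spread_convex[OF spread_S] a(1) b(1) minimals_subset maximals_subset by blast
qed

lemma mem_S_if_shift_pred_mem:
  assumes xg: "x \<in> grid ms" and x'S: "x[0 := x ! 0 - 1] \<in> S" and not_Q: "x ! 0 \<notin> Q"
  shows "x \<in> S"
proof -
  have x_pos: "0 < length x" and x_less: "x ! 0 < m0" and "x ! 0 \<noteq> 0"
    using grid_length_pos[OF xg] grid_nth_0_less[OF xg ms_ne] not_Q zero_in_P by metis+
  obtain a where a: "a \<in> minimals S" "le_pt a (x[0 := x ! 0 - 1])"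
    using ex_minimal_below[OF x'S] by blast
  obtain b where b: "b \<in> maximals S" "le_pt (x[0 := x ! 0 - 1]) b"
    using ex_maximal_above[OF x'S S_subset_grid] by blast
  have "x ! 0 - 1 \<le> b ! 0"
    using le_pt_nth[OF b(2), of 0] x_pos by (simp add: nth_update_0)
  moreover have "b ! 0 \<noteq> x ! 0 - 1"
    using maximal_Suc_in_Q[OF b(1)] not_Q \<open>x ! 0 \<noteq> 0\<close> x_less by fastforce
  ultimately have "x ! 0 \<le> b ! 0"
    by simp
  then have "le_pt (x[0 := x ! 0 - 1, 0 := x ! 0]) b"
    using b(2) by (rule le_pt_update_0_left[rotated])
  moreover have "le_pt a x"
    using a(2) le_pt_update_0_left[OF le_pt_refl, of "x ! 0 - 1" x] le_pt_trans by simp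
  ultimately show "x \<in> S"
    using spread_convex[OF spread_S _ _ xg] a(1) b(1) minimals_subset[of S] maximals_subset[of S] by auto
qed

lemma S_shift_closed: "shift_closed ms Q S"
  unfolding shift_closed_def
  using shift_pred_mem_S mem_S_if_shift_pred_mem S_subset_grid by blast

lemma S_saturated: "saturated S"
  using S_shift_closed shift_closed_iff_saturated by blast

lemma collapse_at_minimal:
  assumes "a \<in> minimals S" "z \<in> grid ms" "z ! 0 = a ! 0"
  shows "collapse z = z"
proof -
  have "z ! 0 < m0"
    using grid_nth_0_less[OF assms(2) ms_ne] .
  then have "z ! 0 + 1 \<in> Q \<or> z ! 0 + 1 = m0"
    using minimal_Suc_in_Q[OF assms(1)] assms(3) by (cases "z ! 0 + 1 < m0") auto
  then show ?thesis
    using collapse_eq_self[OF assms(2)] by blast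
qed

lemma collapse_above_maximal:
  assumes "b \<in> maximals S" "z \<in> grid ms" "z ! 0 = b ! 0 + 1"
  shows "collapse z = z"
proof -
  have "z ! 0 < m0"
    using grid_nth_0_less[OF assms(2) ms_ne] .
  then have "z ! 0 + 1 \<in> Q \<or> z ! 0 + 1 = m0"
    using maximal_Suc_Suc_in_Q[OF assms(1)] assms(3) by (cases "z ! 0 + 1 < m0") auto
  then show ?thesis
    using collapse_eq_self[OF assms(2)] by blast
qed

text \<open>Moving up along \<open>e\<^sub>0\<close> from inside \<open>S\<close> to outside, one leaves \<open>S\<close> right above a maximal element,
  i.e.\ at a point fixed by \<open>collapse\<close>.\<close>

lemma exit_S_along_e0:
  assumes qg: "q \<in> grid ms" and qS: "q \<notin> S" and sS: "q[0 := s] \<in> S" and s: "s \<le> q ! 0"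
  obtains t where "s \<le> t" "t < q ! 0" "q[0 := t] \<in> S" "q[0 := Suc t] \<notin> S"
    "collapse (q[0 := Suc t]) = q[0 := Suc t]"
proof -
  have q_pos: "0 < length q"
    using grid_length_pos[OF qg] .
  have "q[0 := q ! 0] \<notin> S"
    using qS by simp
  then obtain t where t: "s \<le> t" "t < q ! 0" "q[0 := t] \<in> S" "q[0 := Suc t] \<notin> S"
    using nat_ex_last_true[of "\<lambda>t. q[0 := t] \<in> S", OF sS _ s] by blast
  let ?z = "q[0 := Suc t]"
  have zg: "?z \<in> grid ms"
    using grid_update_0[OF qg] t(2) grid_nth_0_less[OF qg ms_ne] by simp
  obtain b where b: "b \<in> maximals S" "le_pt (q[0 := t]) b"
    using ex_maximal_above[OF t(3) S_subset_grid] by blast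
  have "b ! 0 = t"
  proof (rule ccontr)
    assume "b ! 0 \<noteq> t"
    then have "Suc t \<le> b ! 0"
      using le_pt_nth[OF b(2), of 0] q_pos by (simp add: nth_update_0)
    then have "le_pt ?z b"
      using le_pt_update_0_left[OF b(2)] by fastforce
    moreover have "le_pt (q[0 := s]) ?z"
      using le_pt_update_0[OF le_pt_refl, of s "Suc t" q] t(1) by simp
    ultimately have "?z \<in> S"
      using spread_convex[OF spread_S sS _ zg] b(1) maximals_subset by blast
    with t(4) show False
      by simp
  qed
  then have "collapse ?z = ?z"
    using collapse_above_maximal[OF b(1) zg] q_pos by (simp add: nth_update_0)
  with t that show ?thesis
    by blast
qed

text \<open>Suppose \<open>S\<close> is a union of zigzag components of the preimage of \<open>R\<close> under \<open>collapse\<close>.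
  Then \<open>S\<close> is closed in \<open>R\<close> under comparability.\<close>

lemma S_closed_in_R_up:
  assumes R: "spread ms R" and sub: "S \<subseteq> collapse_preimage R"
    and closed: "\<forall>z\<in>collapse_preimage R. \<forall>w\<in>S. comparable w z \<longrightarrow> z \<in> S"
    and p: "p \<in> S" and q: "q \<in> R" and pq: "le_pt p q"
  shows "q \<in> S"
proof (rule ccontr)
  assume qS: "q \<notin> S"
  obtain a where a: "a \<in> minimals S" "le_pt a p"
    using ex_minimal_below[OF p] by blast
  have aS: "a \<in> S"
    using a(1) minimals_subset by blast
  have ag: "a \<in> grid ms" and qg: "q \<in> grid ms"
    using aS q S_subset_grid spread_subset_grid[OF R] by blast+
  have q_pos: "0 < length q"
    using grid_length_pos[OF qg] .
  have aq: "le_pt a q"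
    using le_pt_trans[OF a(2) pq] .
  have a0: "a ! 0 \<le> q ! 0"
    using le_pt_nth[OF aq, of 0] grid_length_pos[OF ag] by simp
  have in_S: "z \<in> S" if "z \<in> grid ms" "z \<in> R" "collapse z = z" "w \<in> S" "comparable w z" for z w
    using closed that unfolding collapse_preimage_def by auto
  let ?w = "q[0 := a ! 0]"
  have wg: "?w \<in> grid ms"
    using grid_update_0[OF qg grid_nth_0_less[OF ag ms_ne]] .
  have aw: "le_pt a ?w"
    using le_pt_update_0_right[OF aq _ q_pos] by simp
  have "a \<in> R"
    using sub aS collapse_at_minimal[OF a(1) ag refl] by (auto simp: collapse_preimage_def)
  then have wR: "?w \<in> R"
    using spread_convex[OF R _ q wg aw le_pt_update_0_left[OF le_pt_refl a0]] by blast
  have "?w \<in> S"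
    using in_S[OF wg wR _ aS comparable_if_le_pt(1)[OF aw]] collapse_at_minimal[OF a(1) wg] q_pos
    by (simp add: nth_update_0)
  then obtain t where t: "a ! 0 \<le> t" "t < q ! 0" "q[0 := t] \<in> S" "q[0 := Suc t] \<notin> S"
    and fixed: "collapse (q[0 := Suc t]) = q[0 := Suc t]"
    using exit_S_along_e0[OF qg qS _ a0] by blast
  let ?z = "q[0 := Suc t]"
  have zg: "?z \<in> grid ms"
    using grid_update_0[OF qg] t(2) grid_nth_0_less[OF qg ms_ne] by simp
  have "le_pt ?w ?z" "le_pt ?z q"
    using le_pt_update_0[OF le_pt_refl, of "a ! 0" "Suc t" q] le_pt_update_0_left[OF le_pt_refl, of "Suc t" q] t(1,2)
    by simp_all
  then have "?z \<in> R"
    using spread_convex[OF R wR q zg] by blast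
  moreover have "comparable (q[0 := t]) ?z"
    by (rule comparable_if_le_pt(1), rule le_pt_update_0) simp_all
  ultimately have "?z \<in> S"
    using in_S[OF zg _ fixed t(3)] by blast
  with t(4) show False
    by simp
qed

lemma S_closed_in_R:
  assumes R: "spread ms R" and sub: "S \<subseteq> collapse_preimage R"
    and closed: "\<forall>z\<in>collapse_preimage R. \<forall>w\<in>S. comparable w z \<longrightarrow> z \<in> S"
    and p: "p \<in> S" and q: "q \<in> R" and pq: "comparable p q"
  shows "q \<in> S"
proof (cases "le_pt p q")
  case True
  then show ?thesis
    using S_closed_in_R_up[OF R sub closed p q] by blast
next
  case False
  then have qp: "le_pt q p"
    using pq by (simp add: comparable_def)
  have qg: "q \<in> grid ms" and pg: "p \<in> grid ms"
    using q p spread_subset_grid[OF R] S_subset_grid by blast+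
  have "collapse p \<in> R"
    using sub p by (auto simp: collapse_preimage_def)
  then have "collapse q \<in> R"
    using spread_convex[OF R q _ collapse_grid[OF qg]] le_pt_collapse[OF qg] collapse_mono[OF qg pg qp]
    by blast
  then show ?thesis
    using closed p comparable_if_le_pt(2)[OF qp] qg unfolding collapse_preimage_def by auto
qed

lemma component_preimage_eq_S:
  assumes R: "spread ms R" and p: "p \<in> collapse_preimage R"
    and eq: "conn_component (collapse_preimage R) p = S"
  shows "R = S"
proof -
  have sub: "S \<subseteq> collapse_preimage R"
    using conn_component_subset[OF p] eq by blast
  have closed: "\<forall>z\<in>collapse_preimage R. \<forall>w\<in>S. comparable w z \<longrightarrow> z \<in> S"
    using conn_component_closed[of _ _ p] eq p by blast
  have S_R: "S \<subseteq> R"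
  proof
    fix x assume xS: "x \<in> S"
    obtain a where a: "a \<in> minimals S" "le_pt a x"
      using ex_minimal_below[OF xS] by blast
    have ag: "a \<in> grid ms" and xg: "x \<in> grid ms"
      using a(1) xS minimals_subset S_subset_grid by blast+
    have "a \<in> R"
      using sub a(1) minimals_subset collapse_at_minimal[OF a(1) ag refl]
      by (fastforce simp: collapse_preimage_def)
    moreover have "collapse x \<in> R"
      using sub xS by (auto simp: collapse_preimage_def)
    ultimately show "x \<in> R"
      using spread_convex[OF R _ _ xg] a(2) le_pt_collapse[OF xg] by blast
  qed
  have "R \<subseteq> S"
  proof
    fix q assume q: "q \<in> R"
    obtain s where s: "s \<in> S"
      using spread_S by (auto simp: spread_def)
    show "q \<in> S"
    proof (rule ccontr)
      assume "q \<notin> S"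
      then obtain p' q' where "(p', q') \<in> comparable_rel R" "p' \<in> S" "q' \<notin> S"
        using rtrancl_leaves_set[OF spread_connected[OF R _ q]] s S_R by blast
      then show False
        using S_closed_in_R[OF R sub closed] by (auto simp: comparable_rel_def)
    qed
  qed
  with S_R show ?thesis
    by blast
qed

end

section \<open>Representations and spread representations\<close>

lemma carrier_mat_empty_eq: "A \<in> carrier_mat n m \<Longrightarrow> B \<in> carrier_mat n m \<Longrightarrow> n = 0 \<or> m = 0 \<Longrightarrow> A = B"
  by (rule eq_matI) auto

lemma mult_carrier_mat_inner_0:
  "(A :: 'a :: semiring_0 mat) \<in> carrier_mat n 0 \<Longrightarrow> B \<in> carrier_mat 0 m \<Longrightarrow> A * B = 0\<^sub>m n m"
  by (rule eq_matI) (auto simp: scalar_prod_def)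

lemma minus_zero_mat [simp]: "(A :: 'a :: group_add mat) \<in> carrier_mat n m \<Longrightarrow> A - 0\<^sub>m n m = A"
  by (rule eq_matI) auto

lemma one_mat_neq_zero_mat:
  assumes "0 < n"
  shows "(1\<^sub>m n :: 'a :: zero_neq_one mat) \<noteq> 0\<^sub>m n n"
proof
  assume "(1\<^sub>m n :: 'a mat) = 0\<^sub>m n n"
  then have "(1\<^sub>m n :: 'a mat) $$ (0, 0) = 0\<^sub>m n n $$ (0, 0)"
    by simp
  with assms show False
    by simp
qed

lemma is_hom_carrier: "is_hom ms V W f \<Longrightarrow> x \<in> grid ms \<Longrightarrow> f x \<in> carrier_mat (rdim W x) (rdim V x)"
  by (simp add: is_hom_def)

lemma is_hom_commute:
  "is_hom ms V W f \<Longrightarrow> x \<in> grid ms \<Longrightarrow> y \<in> grid ms \<Longrightarrow> le_pt x y \<Longrightarrow> f y * rmap V x y = rmap W x y * f x"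
  by (simp add: is_hom_def)

lemma is_rep_carrier:
  "is_rep ms V \<Longrightarrow> x \<in> grid ms \<Longrightarrow> y \<in> grid ms \<Longrightarrow> le_pt x y \<Longrightarrow> rmap V x y \<in> carrier_mat (rdim V y) (rdim V x)"
  by (simp add: is_rep_def)

lemma is_hom_comp:
  assumes U: "is_rep ms U" and V: "is_rep ms V" and W: "is_rep ms W"
    and f: "is_hom ms V W f" and g: "is_hom ms U V g"
  shows "is_hom ms U W (\<lambda>x. f x * g x)"
  unfolding is_hom_def
proof (intro conjI ballI impI)
  fix x assume "x \<in> grid ms"
  then show "f x * g x \<in> carrier_mat (rdim W x) (rdim U x)"
    using is_hom_carrier[OF f] is_hom_carrier[OF g] by (metis mult_carrier_mat)
next
  fix x y assume x: "x \<in> grid ms" and y: "y \<in> grid ms" and le: "le_pt x y"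
  note cf = is_hom_carrier[OF f] and cg = is_hom_carrier[OF g]
  have "f y * g y * rmap U x y = f y * (g y * rmap U x y)"
    using cf[OF y] cg[OF y] is_rep_carrier[OF U x y le] by (rule assoc_mult_mat)
  also have "\<dots> = f y * (rmap V x y * g x)"
    using is_hom_commute[OF g x y le] by simp
  also have "\<dots> = (f y * rmap V x y) * g x"
    using cf[OF y] is_rep_carrier[OF V x y le] cg[OF x] by (rule assoc_mult_mat[symmetric])
  also have "\<dots> = rmap W x y * f x * g x"
    using is_hom_commute[OF f x y le] by simp
  also have "\<dots> = rmap W x y * (f x * g x)"
    using is_rep_carrier[OF W x y le] cf[OF x] cg[OF x] by (rule assoc_mult_mat)
  finally show "f y * g y * rmap U x y = rmap W x y * (f x * g x)" .
qed

lemma is_hom_id: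
  assumes V: "is_rep ms V"
  shows "is_hom ms V V (\<lambda>x. 1\<^sub>m (rdim V x))"
  unfolding is_hom_def
proof (intro conjI ballI impI)
  fix x y assume "x \<in> grid ms" "y \<in> grid ms" "le_pt x y"
  then have c: "rmap V x y \<in> carrier_mat (rdim V y) (rdim V x)"
    by (rule is_rep_carrier[OF V])
  show "1\<^sub>m (rdim V y) * rmap V x y = rmap V x y * 1\<^sub>m (rdim V x)"
    using left_mult_one_mat[OF c] right_mult_one_mat[OF c] by simp
qed simp

lemma is_hom_diff:
  assumes U: "is_rep ms U" and W: "is_rep ms W" and f: "is_hom ms U W f" and g: "is_hom ms U W g"
  shows "is_hom ms U W (\<lambda>x. f x - g x)"
  unfolding is_hom_def
proof (intro conjI ballI impI)
  fix x assume "x \<in> grid ms"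
  then show "f x - g x \<in> carrier_mat (rdim W x) (rdim U x)"
    by (rule minus_carrier_mat[OF is_hom_carrier[OF g]])
next
  fix x y assume x: "x \<in> grid ms" and y: "y \<in> grid ms" and le: "le_pt x y"
  note cf = is_hom_carrier[OF f] and cg = is_hom_carrier[OF g]
  have "(f y - g y) * rmap U x y = f y * rmap U x y - g y * rmap U x y"
    using cf[OF y] cg[OF y] is_rep_carrier[OF U x y le] by (rule minus_mult_distrib_mat)
  also have "\<dots> = rmap W x y * f x - rmap W x y * g x"
    using is_hom_commute[OF f x y le] is_hom_commute[OF g x y le] by simp
  also have "\<dots> = rmap W x y * (f x - g x)"
    using is_rep_carrier[OF W x y le] cf[OF x] cg[OF x] by (rule mult_minus_distrib_mat[symmetric])
  finally show "(f y - g y) * rmap U x y = rmap W x y * (f x - g x)" .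
qed

lemma is_iso_id: "is_rep ms (V :: 'a :: field rep) \<Longrightarrow> is_iso ms V V (\<lambda>x. 1\<^sub>m (rdim V x))"
  unfolding is_iso_def using is_hom_id by (metis right_mult_one_mat one_carrier_mat)

definition spread_dim :: "nat list set \<Rightarrow> nat list \<Rightarrow> nat" where
  "spread_dim R x = (if x \<in> R then 1 else 0)"

lemma spread_dim_in [simp]: "x \<in> R \<Longrightarrow> spread_dim R x = 1"
  and spread_dim_out [simp]: "x \<notin> R \<Longrightarrow> spread_dim R x = 0"
  by (simp_all add: spread_dim_def)

lemma rdim_spread_rep [simp]: "rdim (spread_rep R) x = spread_dim R x"
  by (simp add: spread_rep_def spread_dim_def)

lemma rmap_spread_rep:
  "rmap (spread_rep R) x y = (if x \<in> R \<and> y \<in> R then 1\<^sub>m 1 else 0\<^sub>m (spread_dim R y) (spread_dim R x))"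
  by (simp add: spread_rep_def spread_dim_def)

lemma rmap_spread_rep_in [simp]: "x \<in> R \<Longrightarrow> y \<in> R \<Longrightarrow> rmap (spread_rep R) x y = 1\<^sub>m 1"
  and rmap_spread_rep_out1 [simp]: "x \<notin> R \<Longrightarrow> rmap (spread_rep R) x y = 0\<^sub>m (spread_dim R y) 0"
  and rmap_spread_rep_out2 [simp]: "y \<notin> R \<Longrightarrow> rmap (spread_rep R) x y = 0\<^sub>m 0 (spread_dim R x)"
  by (simp_all add: rmap_spread_rep)

lemma rmap_spread_rep_carrier: "rmap (spread_rep R) x y \<in> carrier_mat (spread_dim R y) (spread_dim R x)"
  by (simp add: rmap_spread_rep)

lemma is_hom_spread_rep_carrier:
  "is_hom ms (spread_rep R1) (spread_rep R2) f \<Longrightarrow> x \<in> grid ms \<Longrightarrow> f x \<in> carrier_mat (spread_dim R2 x) (spread_dim R1 x)"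
  using is_hom_carrier by fastforce

lemma is_rep_spread_rep:
  assumes R: "spread ms R"
  shows "is_rep ms (spread_rep R :: 'a :: field rep)"
  unfolding is_rep_def
proof (intro conjI ballI impI)
  fix x y z assume "x \<in> grid ms" "y \<in> grid ms" "z \<in> grid ms" and le: "le_pt x y \<and> le_pt y z"
  then have "x \<in> R \<Longrightarrow> z \<in> R \<Longrightarrow> y \<in> R"
    using spread_convex[OF R] by blast
  then show "rmap (spread_rep R :: 'a rep) y z * rmap (spread_rep R) x y = rmap (spread_rep R) x z"
    by (cases "x \<in> R"; cases "y \<in> R"; cases "z \<in> R") (simp_all add: mult_carrier_mat_inner_0)
next
  fix x
  show "rmap (spread_rep R :: 'a rep) x x = 1\<^sub>m (rdim (spread_rep R :: 'a rep) x)"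
    by (cases "x \<in> R") (auto intro!: eq_matI)
qed (simp add: rmap_spread_rep_carrier)

lemma spreads_sum_single: "spreads_sum [R] = (spread_rep R :: 'a :: field rep)"
proof -
  have "rmap (dsum2 (spread_rep R) zero_rep) x y = rmap (spread_rep R :: 'a rep) x y" for x y
    using rmap_spread_rep_carrier[of R x y]
    unfolding dsum2_def zero_rep_def by (auto intro!: eq_matI)
  then show ?thesis
    by (intro rep.equality) (auto simp: spreads_sum_def dsum_list_def dsum2_def zero_rep_def spread_rep_def)
qed

lemma in_C_spread_rep:
  assumes "spread ms R"
  shows "in_C ms (spread_rep R :: 'a :: field rep)"
  unfolding in_C_def
proof (intro conjI exI)
  show "is_rep ms (spread_rep R :: 'a rep)"
    using is_rep_spread_rep[OF assms] .
  show "\<forall>R'\<in>set [R]. spread ms R'"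
    using assms by simp
  show "is_iso ms (spreads_sum [R]) (spread_rep R :: 'a rep) (\<lambda>x. 1\<^sub>m (rdim (spread_rep R :: 'a rep) x))"
    unfolding spreads_sum_single using is_iso_id[OF is_rep_spread_rep[OF assms]] .
qed

lemma is_iso_spread_rep_imp_eq:
  assumes iso: "is_iso ms (spread_rep K :: 'a :: field rep) (spread_rep S) f"
    and "K \<subseteq> grid ms" "S \<subseteq> grid ms"
  shows "K = S"
proof (rule ccontr)
  assume "K \<noteq> S"
  then obtain x where x: "x \<in> grid ms" "x \<in> K \<longleftrightarrow> x \<notin> S"
    using assms(2,3) by blast
  obtain g where g: "is_hom ms (spread_rep S) (spread_rep K :: 'a rep) g"
    "g x * f x = 1\<^sub>m (spread_dim K x)" "f x * g x = 1\<^sub>m (spread_dim S x)"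
    using iso x(1) unfolding is_iso_def by auto
  have "f x \<in> carrier_mat (spread_dim S x) (spread_dim K x)"
    "g x \<in> carrier_mat (spread_dim K x) (spread_dim S x)"
    using iso x(1) is_hom_spread_rep_carrier[OF g(1) x(1)] unfolding is_iso_def is_hom_def by simp_all
  then have "(1\<^sub>m 1 :: 'a mat) = 0\<^sub>m 1 1"
    using g(2,3) x(2) by (cases "x \<in> K") (simp_all add: mult_carrier_mat_inner_0)
  then show False
    using one_mat_neq_zero_mat[of 1, where 'a = 'a] by simp
qed

lemma in_rad_spread_rep:
  assumes K: "spread ms K" and S: "spread ms S" and "K \<noteq> S"
    and f: "is_hom ms (spread_rep K) (spread_rep S :: 'a :: field rep) f"
  shows "in_rad ms (spread_rep K) (spread_rep S :: 'a rep) f"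
proof -
  have "\<not> is_iso ms (spread_rep K) (spread_rep S :: 'a rep) g" for g
    using is_iso_spread_rep_imp_eq spread_subset_grid K S \<open>K \<noteq> S\<close> by blast
  then show ?thesis
    unfolding in_rad_def
    using in_C_spread_rep[OF K] in_C_spread_rep[OF S] f K S
      is_iso_id[OF is_rep_spread_rep[OF K]] is_iso_id[OF is_rep_spread_rep[OF S]]
    by (intro conjI exI[of _ "[K]"] exI[of _ "[S]"]
        exI[of _ "\<lambda>x. 1\<^sub>m (rdim (spread_rep K :: 'a rep) x)"]
        exI[of _ "\<lambda>x. 1\<^sub>m (rdim (spread_rep S :: 'a rep) x)"])
      (simp_all add: spreads_sum_single)
qed

definition overlap_map :: "nat list set \<Rightarrow> nat list set \<Rightarrow> nat list \<Rightarrow> 'a :: field mat" where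
  "overlap_map R1 R2 x =
     (if x \<in> R1 \<and> x \<in> R2 then 1\<^sub>m 1 else 0\<^sub>m (spread_dim R2 x) (spread_dim R1 x))"

lemma overlap_map_carrier: "overlap_map R1 R2 x \<in> carrier_mat (spread_dim R2 x) (spread_dim R1 x)"
  by (simp add: overlap_map_def)

lemma is_hom_overlap_map:
  assumes up: "\<And>x y. x \<in> grid ms \<Longrightarrow> y \<in> grid ms \<Longrightarrow> le_pt x y \<Longrightarrow> x \<in> R1 \<Longrightarrow> x \<in> R2 \<Longrightarrow> y \<in> R2 \<Longrightarrow> y \<in> R1"
    and down: "\<And>x y. x \<in> grid ms \<Longrightarrow> y \<in> grid ms \<Longrightarrow> le_pt x y \<Longrightarrow> x \<in> R1 \<Longrightarrow> y \<in> R1 \<Longrightarrow> y \<in> R2 \<Longrightarrow> x \<in> R2"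
  shows "is_hom ms (spread_rep R1) (spread_rep R2 :: 'a :: field rep) (overlap_map R1 R2)"
  unfolding is_hom_def
proof (intro conjI ballI impI)
  fix x y assume x: "x \<in> grid ms" and y: "y \<in> grid ms" and le: "le_pt x y"
  have "(overlap_map R1 R2 y :: 'a mat) * rmap (spread_rep R1) x y \<in> carrier_mat (spread_dim R2 y) (spread_dim R1 x)"
    "rmap (spread_rep R2) x y * (overlap_map R1 R2 x :: 'a mat) \<in> carrier_mat (spread_dim R2 y) (spread_dim R1 x)"
    using mult_carrier_mat overlap_map_carrier rmap_spread_rep_carrier by blast+
  moreover have "x \<in> R1 \<Longrightarrow> y \<in> R2 \<Longrightarrow> x \<in> R2 \<longleftrightarrow> y \<in> R1"
    using up[OF x y le] down[OF x y le] by blast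
  ultimately show "(overlap_map R1 R2 y :: 'a mat) * rmap (spread_rep R1) x y =
      rmap (spread_rep R2) x y * overlap_map R1 R2 x"
    by (cases "x \<in> R1 \<and> y \<in> R2")
      (auto simp: overlap_map_def mult_carrier_mat_inner_0 intro: carrier_mat_empty_eq)
qed (simp add: overlap_map_carrier)

lemma endo_spread_rep_const:
  assumes R: "spread ms R" and e: "is_hom ms (spread_rep R) (spread_rep R :: 'a :: field rep) e"
    and "x \<in> R" "y \<in> R"
  shows "e x = e y"
proof -
  have step: "e a = e b" if "(a, b) \<in> comparable_rel R" for a b
  proof -
    have "a \<in> R" "b \<in> R" "comparable a b" and ab: "a \<in> grid ms" "b \<in> grid ms"
      using that spread_subset_grid[OF R] by (auto simp: comparable_rel_def)
    moreover have "e a \<in> carrier_mat 1 1" "e b \<in> carrier_mat 1 1"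
      using is_hom_spread_rep_carrier[OF e] ab calculation(1,2) by fastforce+
    ultimately show ?thesis
      using is_hom_commute[OF e ab] is_hom_commute[OF e ab(2,1)]
      unfolding comparable_def by fastforce
  qed
  have "(x, y) \<in> (comparable_rel R)\<^sup>*"
    using spread_connected[OF R assms(3,4)] .
  then show ?thesis
    by (induction rule: rtrancl_induct) (simp_all add: step)
qed

lemma hom_spread_rep_zero_below_exit:
  assumes f: "is_hom ms (spread_rep A) (spread_rep B :: 'a :: field rep) f"
    and "y \<in> grid ms" "z \<in> grid ms" "y \<in> A" "y \<in> B" "z \<in> B" "z \<notin> A" "le_pt y z"
  shows "f y = 0\<^sub>m 1 1"
proof -
  have "f z * rmap (spread_rep A) y z = rmap (spread_rep B) y z * f y"
    using is_hom_commute[OF f assms(2,3,8)] .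
  moreover have "f z \<in> carrier_mat 1 0" "f y \<in> carrier_mat 1 1"
    using is_hom_spread_rep_carrier[OF f] assms by fastforce+
  ultimately show ?thesis
    using assms by (simp add: mult_carrier_mat_inner_0)
qed

lemma hom_spread_rep_zero_above_entry:
  assumes f: "is_hom ms (spread_rep A) (spread_rep B :: 'a :: field rep) f"
    and "y \<in> grid ms" "z \<in> grid ms" "y \<in> A" "y \<in> B" "z \<in> A" "z \<notin> B" "le_pt z y"
  shows "f y = 0\<^sub>m 1 1"
proof -
  have "f y * rmap (spread_rep A) z y = rmap (spread_rep B) z y * f z"
    using is_hom_commute[OF f assms(3,2,8)] .
  moreover have "f z \<in> carrier_mat 0 1" "f y \<in> carrier_mat 1 1"
    using is_hom_spread_rep_carrier[OF f] assms by fastforce+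
  ultimately show ?thesis
    using assms by (simp add: mult_carrier_mat_inner_0)
qed

text \<open>If \<open>w \<circ> u\<close> were nonzero somewhere, it would be a nonzero scalar on all of \<open>R1\<close>; so \<open>R1 \<subseteq> R2\<close>,
  and at an edge of a zigzag path leaving \<open>R1\<close> inside \<open>R2\<close> one of \<open>u\<close>, \<open>w\<close> vanishes.\<close>

lemma hom_spread_rep_round_trip_zero:
  fixes u w :: "nat list \<Rightarrow> 'a :: field mat"
  assumes R1: "spread ms R1" and R2: "spread ms R2" and "R1 \<noteq> R2"
    and u: "is_hom ms (spread_rep R1) (spread_rep R2 :: 'a rep) u"
    and w: "is_hom ms (spread_rep R2) (spread_rep R1 :: 'a rep) w"
    and x0: "x0 \<in> grid ms"
  shows "w x0 * u x0 = 0\<^sub>m (spread_dim R1 x0) (spread_dim R1 x0)"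
proof (rule ccontr)
  assume nz: "w x0 * u x0 \<noteq> 0\<^sub>m (spread_dim R1 x0) (spread_dim R1 x0)"
  have G1: "R1 \<subseteq> grid ms" and G2: "R2 \<subseteq> grid ms"
    using R1 R2 spread_subset_grid by blast+
  have e: "is_hom ms (spread_rep R1) (spread_rep R1 :: 'a rep) (\<lambda>x. w x * u x)"
    using is_hom_comp[OF is_rep_spread_rep[OF R1] is_rep_spread_rep[OF R2] is_rep_spread_rep[OF R1] w u] .
  have zero: "w x * u x = 0\<^sub>m (spread_dim R1 x) (spread_dim R1 x)"
    if "x \<in> grid ms" "x \<notin> R1 \<or> x \<notin> R2 \<or> u x = 0\<^sub>m 1 1 \<or> w x = 0\<^sub>m 1 1" for x
    using is_hom_spread_rep_carrier[OF u that(1)] is_hom_spread_rep_carrier[OF w that(1)] that(2)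
    by (cases "x \<in> R1"; cases "x \<in> R2") (auto simp: mult_carrier_mat_inner_0 intro: carrier_mat_empty_eq)
  have x0R: "x0 \<in> R1" "x0 \<in> R2"
    using zero[OF x0] nz by blast+
  have nz_R1: "w x * u x \<noteq> 0\<^sub>m 1 1" if "x \<in> R1" for x
    using endo_spread_rep_const[OF R1 e that x0R(1)] nz x0R(1) by simp
  have "R1 \<subseteq> R2"
    using zero nz_R1 G1 by fastforce
  moreover have "R2 \<subseteq> R1"
  proof
    fix q assume q: "q \<in> R2"
    show "q \<in> R1"
    proof (rule ccontr)
      assume "q \<notin> R1"
      then obtain y z where "(y, z) \<in> comparable_rel R2" "y \<in> R1" "z \<notin> R1"
        using rtrancl_leaves_set[OF spread_connected[OF R2 x0R(2) q]] x0R(1) by blast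
      then have "y \<in> R2" "z \<in> R2" "comparable y z" "y \<in> grid ms" "z \<in> grid ms"
        using G2 by (auto simp: comparable_rel_def)
      then have "u y = 0\<^sub>m 1 1 \<or> w y = 0\<^sub>m 1 1"
        using hom_spread_rep_zero_below_exit[OF u] hom_spread_rep_zero_above_entry[OF w]
          \<open>y \<in> R1\<close> \<open>z \<notin> R1\<close> unfolding comparable_def by blast
      then show False
        using zero[of y] nz_R1[OF \<open>y \<in> R1\<close>] \<open>y \<in> grid ms\<close> \<open>y \<in> R1\<close> by simp
    qed
  qed
  ultimately show False
    using \<open>R1 \<noteq> R2\<close> by blast
qed

section \<open>Direct summands\<close>

definition embed_mat :: "nat \<Rightarrow> nat \<Rightarrow> 'a :: semiring_1 mat" where
  "embed_mat n m = mat n m (\<lambda>(i, j). if i = j then 1 else 0)"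

lemma embed_mat_carrier [simp]: "embed_mat n m \<in> carrier_mat n m"
  and dim_embed_mat [simp]: "dim_row (embed_mat n m) = n" "dim_col (embed_mat n m) = m"
  by (simp_all add: embed_mat_def)

lemma embed_mat_mult:
  assumes "(B :: 'a :: semiring_1 mat) \<in> carrier_mat m c"
  shows "embed_mat n m * B = mat n c (\<lambda>(i, j). if i < m then B $$ (i, j) else 0)"
proof (rule eq_matI)
  fix i j assume "i < dim_row (mat n c (\<lambda>(i, j). if i < m then B $$ (i, j) else 0))"
    and "j < dim_col (mat n c (\<lambda>(i, j). if i < m then B $$ (i, j) else 0))"
  then have ij: "i < n" "j < c"
    by auto
  have "(embed_mat n m * B) $$ (i, j) = (\<Sum>k\<in>{0..<m}. (if i = k then 1 else 0) * B $$ (k, j))"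
    using assms ij by (simp add: embed_mat_def scalar_prod_def)
  also have "\<dots> = (\<Sum>k\<in>{0..<m}. if i = k then B $$ (k, j) else 0)"
    by (rule sum.cong) auto
  also have "\<dots> = (if i < m then B $$ (i, j) else 0)"
    by (simp add: sum.delta)
  finally show "(embed_mat n m * B) $$ (i, j) = mat n c (\<lambda>(i, j). if i < m then B $$ (i, j) else 0) $$ (i, j)"
    using ij by simp
qed (use assms in auto)

lemma mult_embed_mat:
  assumes "(B :: 'a :: semiring_1 mat) \<in> carrier_mat r n"
  shows "B * embed_mat n m = mat r m (\<lambda>(i, j). if j < n then B $$ (i, j) else 0)"
proof (rule eq_matI)
  fix i j assume "i < dim_row (mat r m (\<lambda>(i, j). if j < n then B $$ (i, j) else 0))"
    and "j < dim_col (mat r m (\<lambda>(i, j). if j < n then B $$ (i, j) else 0))"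
  then have ij: "i < r" "j < m"
    by auto
  have "(B * embed_mat n m) $$ (i, j) = (\<Sum>k\<in>{0..<n}. B $$ (i, k) * (if k = j then 1 else 0))"
    using assms ij by (simp add: embed_mat_def scalar_prod_def)
  also have "\<dots> = (\<Sum>k\<in>{0..<n}. if k = j then B $$ (i, k) else 0)"
    by (rule sum.cong) auto
  also have "\<dots> = (if j < n then B $$ (i, j) else 0)"
    by (simp add: sum.delta)
  finally show "(B * embed_mat n m) $$ (i, j) = mat r m (\<lambda>(i, j). if j < n then B $$ (i, j) else 0) $$ (i, j)"
    using ij by simp
qed (use assms in auto)

lemma rdim_dsum2 [simp]: "rdim (dsum2 V W) x = rdim V x + rdim W x"
  by (simp add: dsum2_def)

lemma rmap_dsum2:
  "rmap (dsum2 V W) x y =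
     four_block_mat (rmap V x y) (0\<^sub>m (rdim V y) (rdim W x)) (0\<^sub>m (rdim W y) (rdim V x)) (rmap W x y)"
  by (simp add: dsum2_def)

lemma is_rep_dsum2:
  fixes V W :: "'a :: field rep"
  assumes V: "is_rep ms V" and W: "is_rep ms W"
  shows "is_rep ms (dsum2 V W)"
  unfolding is_rep_def
proof (intro conjI ballI impI)
  fix x y assume "x \<in> grid ms" "y \<in> grid ms" "le_pt x y"
  then show "rmap (dsum2 V W) x y \<in> carrier_mat (rdim (dsum2 V W) y) (rdim (dsum2 V W) x)"
    unfolding rmap_dsum2 rdim_dsum2
    using is_rep_carrier[OF V] is_rep_carrier[OF W] by (intro four_block_carrier_mat)
next
  fix x assume "x \<in> grid ms"
  then show "rmap (dsum2 V W) x x = 1\<^sub>m (rdim (dsum2 V W) x)"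
    using V W unfolding rmap_dsum2 is_rep_def by simp
next
  fix x y z assume xyz: "x \<in> grid ms" "y \<in> grid ms" "z \<in> grid ms" and le: "le_pt x y \<and> le_pt y z"
  have cV: "rmap V y z \<in> carrier_mat (rdim V z) (rdim V y)" "rmap V x y \<in> carrier_mat (rdim V y) (rdim V x)"
    and cW: "rmap W y z \<in> carrier_mat (rdim W z) (rdim W y)" "rmap W x y \<in> carrier_mat (rdim W y) (rdim W x)"
    using is_rep_carrier[OF V] is_rep_carrier[OF W] xyz le by blast+
  have comp: "rmap V y z * rmap V x y = rmap V x z" "rmap W y z * rmap W x y = rmap W x z"
    using V W xyz le unfolding is_rep_def by blast+
  then have "rmap V x z \<in> carrier_mat (rdim V z) (rdim V x)" "rmap W x z \<in> carrier_mat (rdim W z) (rdim W x)"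
    using cV cW mult_carrier_mat by metis+
  moreover have "rmap (dsum2 V W) y z * rmap (dsum2 V W) x y =
    four_block_mat (rmap V y z * rmap V x y + 0\<^sub>m (rdim V z) (rdim W y) * 0\<^sub>m (rdim W y) (rdim V x))
                   (rmap V y z * 0\<^sub>m (rdim V y) (rdim W x) + 0\<^sub>m (rdim V z) (rdim W y) * rmap W x y)
                   (0\<^sub>m (rdim W z) (rdim V y) * rmap V x y + rmap W y z * 0\<^sub>m (rdim W y) (rdim V x))
                   (0\<^sub>m (rdim W z) (rdim V y) * 0\<^sub>m (rdim V y) (rdim W x) + rmap W y z * rmap W x y)"
    unfolding rmap_dsum2 using cV cW by (intro mult_four_block_mat) auto
  ultimately show "rmap (dsum2 V W) y z * rmap (dsum2 V W) x y = rmap (dsum2 V W) x z"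
    unfolding rmap_dsum2 using cV cW comp by simp
qed

definition dsum_incl :: "'a :: field rep \<Rightarrow> 'a rep \<Rightarrow> nat list \<Rightarrow> 'a mat" where
  "dsum_incl V W x = embed_mat (rdim V x + rdim W x) (rdim V x)"

definition dsum_proj :: "'a :: field rep \<Rightarrow> 'a rep \<Rightarrow> nat list \<Rightarrow> 'a mat" where
  "dsum_proj V W x = embed_mat (rdim V x) (rdim V x + rdim W x)"

lemma is_hom_dsum_incl:
  fixes V W :: "'a :: field rep"
  assumes V: "is_rep ms V" and W: "is_rep ms W"
  shows "is_hom ms V (dsum2 V W) (dsum_incl V W)"
  unfolding is_hom_def
proof (intro conjI ballI impI)
  fix x y assume x: "x \<in> grid ms" and y: "y \<in> grid ms" and le: "le_pt x y"
  have cV: "rmap V x y \<in> carrier_mat (rdim V y) (rdim V x)"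
    and cW: "rmap W x y \<in> carrier_mat (rdim W y) (rdim W x)"
    using is_rep_carrier[OF V x y le] is_rep_carrier[OF W x y le] .
  have cD: "rmap (dsum2 V W) x y \<in> carrier_mat (rdim V y + rdim W y) (rdim V x + rdim W x)"
    unfolding rmap_dsum2 using four_block_carrier_mat[OF cV cW] .
  show "dsum_incl V W y * rmap V x y = rmap (dsum2 V W) x y * dsum_incl V W x"
    unfolding dsum_incl_def embed_mat_mult[OF cV] mult_embed_mat[OF cD]
    using cV cW by (intro eq_matI) (auto simp: rmap_dsum2)
qed (simp add: dsum_incl_def)

lemma is_hom_dsum_proj:
  fixes V W :: "'a :: field rep"
  assumes V: "is_rep ms V" and W: "is_rep ms W"
  shows "is_hom ms (dsum2 V W) V (dsum_proj V W)"
  unfolding is_hom_def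
proof (intro conjI ballI impI)
  fix x y assume x: "x \<in> grid ms" and y: "y \<in> grid ms" and le: "le_pt x y"
  have cV: "rmap V x y \<in> carrier_mat (rdim V y) (rdim V x)"
    and cW: "rmap W x y \<in> carrier_mat (rdim W y) (rdim W x)"
    using is_rep_carrier[OF V x y le] is_rep_carrier[OF W x y le] .
  have cD: "rmap (dsum2 V W) x y \<in> carrier_mat (rdim V y + rdim W y) (rdim V x + rdim W x)"
    unfolding rmap_dsum2 using four_block_carrier_mat[OF cV cW] .
  show "dsum_proj V W y * rmap (dsum2 V W) x y = rmap V x y * dsum_proj V W x"
    unfolding dsum_proj_def embed_mat_mult[OF cD] mult_embed_mat[OF cV]
    using cV cW by (intro eq_matI) (auto simp: rmap_dsum2)
qed (simp add: dsum_proj_def)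

lemma dsum_proj_incl: "dsum_proj V W x * dsum_incl V W x = 1\<^sub>m (rdim V x)"
  unfolding dsum_proj_def dsum_incl_def
  by (subst embed_mat_mult[OF embed_mat_carrier]) (auto simp: embed_mat_def)

lemma direct_summand_retraction:
  fixes V C :: "'a :: field rep"
  assumes V: "is_rep ms V" and C: "is_rep ms C" and summand: "direct_summand ms V C"
  obtains \<iota> \<theta> where "is_hom ms V C \<iota>" "is_hom ms C V \<theta>" "\<And>x. x \<in> grid ms \<Longrightarrow> \<theta> x * \<iota> x = 1\<^sub>m (rdim V x)"
proof -
  obtain X \<alpha> \<alpha>' where X: "is_rep ms X" and \<alpha>: "is_hom ms (dsum2 V X) C \<alpha>"
    and \<alpha>': "is_hom ms C (dsum2 V X) \<alpha>'" and \<alpha>'\<alpha>: "\<And>x. x \<in> grid ms \<Longrightarrow> \<alpha>' x * \<alpha> x = 1\<^sub>m (rdim (dsum2 V X) x)"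
    using summand unfolding direct_summand_def is_iso_def by blast
  have D: "is_rep ms (dsum2 V X)"
    using is_rep_dsum2[OF V X] .
  define \<iota> where "\<iota> x = \<alpha> x * dsum_incl V X x" for x
  define \<theta> where "\<theta> x = dsum_proj V X x * \<alpha>' x" for x
  have "\<theta> x * \<iota> x = 1\<^sub>m (rdim V x)" if x: "x \<in> grid ms" for x
  proof -
    have cp: "dsum_proj V X x \<in> carrier_mat (rdim V x) (rdim (dsum2 V X) x)"
      and ci: "dsum_incl V X x \<in> carrier_mat (rdim (dsum2 V X) x) (rdim V x)"
      using is_hom_carrier[OF is_hom_dsum_proj[OF V X] x] is_hom_carrier[OF is_hom_dsum_incl[OF V X] x] .
    have ca: "\<alpha> x \<in> carrier_mat (rdim C x) (rdim (dsum2 V X) x)"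
      and ca': "\<alpha>' x \<in> carrier_mat (rdim (dsum2 V X) x) (rdim C x)"
      using is_hom_carrier[OF \<alpha> x] is_hom_carrier[OF \<alpha>' x] .
    have "\<theta> x * \<iota> x = dsum_proj V X x * (\<alpha>' x * (\<alpha> x * dsum_incl V X x))"
      unfolding \<theta>_def \<iota>_def using cp ca' mult_carrier_mat[OF ca ci] by (rule assoc_mult_mat)
    also have "\<alpha>' x * (\<alpha> x * dsum_incl V X x) = (\<alpha>' x * \<alpha> x) * dsum_incl V X x"
      using ca' ca ci by (rule assoc_mult_mat[symmetric])
    finally show ?thesis
      using \<alpha>'\<alpha>[OF x] ci dsum_proj_incl[of V X x] by simp
  qed
  moreover have "is_hom ms V C \<iota>" "is_hom ms C V \<theta>"
    unfolding \<iota>_def \<theta>_def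
    using is_hom_comp[OF V D C \<alpha> is_hom_dsum_incl[OF V X]] is_hom_comp[OF C D V is_hom_dsum_proj[OF V X] \<alpha>'] .
  ultimately show ?thesis
    using that by blast
qed

lemma right_minimal_one_minus_is_iso:
  fixes \<rho> :: "nat list \<Rightarrow> 'a :: field mat"
  assumes rm: "right_minimal ms C M \<rho>" and C: "is_rep ms C" and V: "is_rep ms V"
    and \<rho>: "is_hom ms C M \<rho>" and \<epsilon>: "is_hom ms V C \<epsilon>" and \<theta>: "is_hom ms C V \<theta>"
    and \<rho>\<epsilon>: "\<And>x. x \<in> grid ms \<Longrightarrow> \<rho> x * \<epsilon> x = 0\<^sub>m (rdim M x) (rdim V x)"
  shows "is_iso ms C C (\<lambda>x. 1\<^sub>m (rdim C x) - \<epsilon> x * \<theta> x)"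
proof -
  have "\<rho> x * (1\<^sub>m (rdim C x) - \<epsilon> x * \<theta> x) = \<rho> x" if x: "x \<in> grid ms" for x
  proof -
    have c\<rho>: "\<rho> x \<in> carrier_mat (rdim M x) (rdim C x)" and c\<theta>: "\<theta> x \<in> carrier_mat (rdim V x) (rdim C x)"
      and c\<epsilon>: "\<epsilon> x \<in> carrier_mat (rdim C x) (rdim V x)"
      using is_hom_carrier[OF _ x] \<rho> \<theta> \<epsilon> by blast+
    have "\<rho> x * (1\<^sub>m (rdim C x) - \<epsilon> x * \<theta> x) = \<rho> x * 1\<^sub>m (rdim C x) - \<rho> x * (\<epsilon> x * \<theta> x)"
      using c\<rho> c\<epsilon> c\<theta> by (intro mult_minus_distrib_mat) auto
    also have "\<rho> x * (\<epsilon> x * \<theta> x) = 0\<^sub>m (rdim M x) (rdim C x)"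
      using c\<rho> c\<epsilon> c\<theta> \<rho>\<epsilon>[OF x] by (simp add: assoc_mult_mat[symmetric])
    finally show ?thesis
      using c\<rho> by simp
  qed
  moreover have "is_hom ms C C (\<lambda>x. 1\<^sub>m (rdim C x) - \<epsilon> x * \<theta> x)"
    using is_hom_diff[OF C C is_hom_id[OF C] is_hom_comp[OF C V C \<epsilon> \<theta>]] .
  ultimately show ?thesis
    using rm unfolding right_minimal_def by blast
qed

text \<open>With \<open>\<epsilon> = \<iota> - h\<close>, the automorphism \<open>\<phi> = 1 - \<epsilon> \<theta>\<close> of \<open>C\<close> satisfies \<open>\<theta> \<phi> = \<theta> - (\<theta> \<epsilon>) \<theta> = 0\<close>,
  hence \<open>\<theta> = 0\<close>.\<close>

lemma right_minimal_no_annihilated_lift: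
  fixes \<rho> :: "nat list \<Rightarrow> 'a :: field mat"
  assumes rm: "right_minimal ms C M \<rho>" and C: "is_rep ms C" and V: "is_rep ms V"
    and \<rho>: "is_hom ms C M \<rho>" and \<iota>: "is_hom ms V C \<iota>" and \<theta>: "is_hom ms C V \<theta>"
    and \<theta>\<iota>: "\<And>x. x \<in> grid ms \<Longrightarrow> \<theta> x * \<iota> x = 1\<^sub>m (rdim V x)"
    and h: "is_hom ms V C h" and \<rho>h: "\<And>x. x \<in> grid ms \<Longrightarrow> \<rho> x * h x = \<rho> x * \<iota> x"
    and \<theta>h: "\<And>x. x \<in> grid ms \<Longrightarrow> \<theta> x * h x = 0\<^sub>m (rdim V x) (rdim V x)"
    and x0: "x0 \<in> grid ms" "0 < rdim V x0"
  shows False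
proof -
  define \<epsilon> where "\<epsilon> x = \<iota> x - h x" for x
  have \<epsilon>: "is_hom ms V C \<epsilon>"
    unfolding \<epsilon>_def using is_hom_diff[OF V C \<iota> h] .
  have c\<rho>: "\<rho> x \<in> carrier_mat (rdim M x) (rdim C x)" and c\<theta>: "\<theta> x \<in> carrier_mat (rdim V x) (rdim C x)"
    and c\<iota>: "\<iota> x \<in> carrier_mat (rdim C x) (rdim V x)" and ch: "h x \<in> carrier_mat (rdim C x) (rdim V x)"
    and c\<epsilon>: "\<epsilon> x \<in> carrier_mat (rdim C x) (rdim V x)" if "x \<in> grid ms" for x
    using is_hom_carrier[OF _ that] \<rho> \<theta> \<iota> h \<epsilon> by blast+
  have "\<rho> x * \<epsilon> x = 0\<^sub>m (rdim M x) (rdim V x)" if x: "x \<in> grid ms" for x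
  proof -
    have "\<rho> x * \<epsilon> x = \<rho> x * \<iota> x - \<rho> x * h x"
      unfolding \<epsilon>_def using c\<rho>[OF x] c\<iota>[OF x] ch[OF x] by (rule mult_minus_distrib_mat)
    then show ?thesis
      using \<rho>h[OF x] c\<rho>[OF x] c\<iota>[OF x] by simp
  qed
  then obtain \<phi>' where \<phi>': "is_hom ms C C \<phi>'" "(1\<^sub>m (rdim C x0) - \<epsilon> x0 * \<theta> x0) * \<phi>' x0 = 1\<^sub>m (rdim C x0)"
    using right_minimal_one_minus_is_iso[OF rm C V \<rho> \<epsilon> \<theta>] x0(1) unfolding is_iso_def by blast
  note c\<theta>0 = c\<theta>[OF x0(1)] and c\<epsilon>0 = c\<epsilon>[OF x0(1)]
  have c\<phi>'0: "\<phi>' x0 \<in> carrier_mat (rdim C x0) (rdim C x0)"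
    using is_hom_carrier[OF \<phi>'(1) x0(1)] .
  have \<theta>\<epsilon>: "\<theta> x0 * \<epsilon> x0 = 1\<^sub>m (rdim V x0)"
  proof -
    have "\<theta> x0 * \<epsilon> x0 = \<theta> x0 * \<iota> x0 - \<theta> x0 * h x0"
      unfolding \<epsilon>_def using c\<theta>0 c\<iota>[OF x0(1)] ch[OF x0(1)] by (rule mult_minus_distrib_mat)
    then show ?thesis
      using \<theta>\<iota>[OF x0(1)] \<theta>h[OF x0(1)] by simp
  qed
  have "\<theta> x0 * (1\<^sub>m (rdim C x0) - \<epsilon> x0 * \<theta> x0) = \<theta> x0 * 1\<^sub>m (rdim C x0) - \<theta> x0 * (\<epsilon> x0 * \<theta> x0)"
    using c\<theta>0 c\<epsilon>0 by (intro mult_minus_distrib_mat) auto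
  also have "\<dots> = \<theta> x0 - (\<theta> x0 * \<epsilon> x0) * \<theta> x0"
    using c\<theta>0 c\<epsilon>0 by (simp add: assoc_mult_mat)
  also have "\<dots> = 0\<^sub>m (rdim V x0) (rdim C x0)"
    using \<theta>\<epsilon> c\<theta>0 by simp
  finally have \<theta>\<phi>: "\<theta> x0 * (1\<^sub>m (rdim C x0) - \<epsilon> x0 * \<theta> x0) = 0\<^sub>m (rdim V x0) (rdim C x0)" .
  have "\<theta> x0 = \<theta> x0 * ((1\<^sub>m (rdim C x0) - \<epsilon> x0 * \<theta> x0) * \<phi>' x0)"
    using \<phi>'(2) c\<theta>0 by simp
  also have "\<dots> = (\<theta> x0 * (1\<^sub>m (rdim C x0) - \<epsilon> x0 * \<theta> x0)) * \<phi>' x0"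
    using c\<theta>0 minus_carrier_mat[OF mult_carrier_mat[OF c\<epsilon>0 c\<theta>0]] c\<phi>'0
    by (rule assoc_mult_mat[symmetric])
  also have "\<dots> = 0\<^sub>m (rdim V x0) (rdim C x0)"
    using \<theta>\<phi> c\<phi>'0 by simp
  finally have "\<theta> x0 = 0\<^sub>m (rdim V x0) (rdim C x0)" .
  then have "1\<^sub>m (rdim V x0) = (0\<^sub>m (rdim V x0) (rdim V x0) :: 'a mat)"
    using \<theta>\<iota>[OF x0(1)] c\<iota>[OF x0(1)] by simp
  then show False
    using one_mat_neq_zero_mat[OF x0(2), where 'a = 'a] by blast
qed

section \<open>Summands of a minimal spread-radical approximation\<close>

context coord_blocks
begin

definition glue :: "nat list set \<Rightarrow> 'a :: field rep \<Rightarrow> (nat list set \<Rightarrow> nat list \<Rightarrow> 'a mat) \<Rightarrow> nat list \<Rightarrow> 'a mat"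
  where "glue R C H x =
    (if x \<in> collapse_preimage R
     then H (conn_component (collapse_preimage R) x) x * overlap_map R (conn_component (collapse_preimage R) x) x
     else 0\<^sub>m (rdim C x) (spread_dim R x))"

end

text \<open>A morphism \<open>g : \<bbbk>\<^sub>R \<rightarrow> \<bbbk>\<^sub>S\<close> factors through the spreads \<open>\<bbbk>\<^sub>K\<close>, where \<open>K\<close> runs over the zigzag
  components (\<open>piece\<close>s) of the preimage of \<open>R\<close> under \<open>collapse\<close>.\<close>

locale hom_into_spread = spread_setting ms S for ms S +
  fixes R :: "nat list set" and g :: "nat list \<Rightarrow> 'a :: field mat"
  assumes spread_R: "spread ms R"
    and hom_g: "is_hom ms (spread_rep R) (spread_rep S :: 'a rep) g"
begin

abbreviation piece :: "nat list \<Rightarrow> nat list set" where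
  "piece p \<equiv> conn_component (collapse_preimage R) p"

text \<open>A point \<open>x\<close> of a piece need not lie in \<open>R\<close>, but \<open>collapse x\<close> does.\<close>

definition through_piece :: "nat list set \<Rightarrow> nat list \<Rightarrow> 'a mat" where
  "through_piece K x = (if x \<in> K \<and> x \<in> S then g (collapse x) else 0\<^sub>m (spread_dim S x) (spread_dim K x))"

lemma g_carrier: "x \<in> grid ms \<Longrightarrow> g x \<in> carrier_mat (spread_dim S x) (spread_dim R x)"
  using is_hom_spread_rep_carrier[OF hom_g] .

lemma S_mem_collapse_iff: "x \<in> grid ms \<Longrightarrow> collapse x \<in> S \<longleftrightarrow> x \<in> S"
  using S_saturated by (simp add: saturated_def)

lemma g_commute:
  "x \<in> grid ms \<Longrightarrow> y \<in> grid ms \<Longrightarrow> le_pt x y \<Longrightarrow> g y * rmap (spread_rep R) x y = rmap (spread_rep S) x y * g x"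
  using is_hom_commute[OF hom_g] .

lemma g_collapse_eq:
  assumes x: "x \<in> grid ms" and "x \<in> R" "x \<in> S" "collapse x \<in> R"
  shows "g (collapse x) = g x"
proof -
  have "collapse x \<in> S" "collapse x \<in> grid ms"
    using assms S_mem_collapse_iff collapse_grid by blast+
  then show ?thesis
    using g_commute[OF x _ le_pt_collapse[OF x]] g_carrier[OF x] g_carrier[of "collapse x"] assms
    by simp
qed

lemma g_zero_off_preimage:
  assumes x: "x \<in> grid ms" and "collapse x \<notin> R"
  shows "g x = 0\<^sub>m (spread_dim S x) (spread_dim R x)"
proof (cases "x \<in> R \<and> x \<in> S")
  case True
  have "collapse x \<in> S" "collapse x \<in> grid ms"
    using True x S_mem_collapse_iff collapse_grid by blast+
  then show ?thesis
    using g_commute[OF x _ le_pt_collapse[OF x]] g_carrier[OF x] g_carrier[of "collapse x"] assms True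
    by (simp add: mult_carrier_mat_inner_0)
qed (use g_carrier[OF x] in \<open>auto intro: carrier_mat_empty_eq\<close>)

lemma through_piece_carrier:
  assumes "K \<subseteq> collapse_preimage R" "x \<in> grid ms"
  shows "through_piece K x \<in> carrier_mat (spread_dim S x) (spread_dim K x)"
proof (cases "x \<in> K \<and> x \<in> S")
  case True
  then have "collapse x \<in> R" "collapse x \<in> S"
    using assms S_mem_collapse_iff by (auto simp: collapse_preimage_def)
  then show ?thesis
    using True g_carrier[OF collapse_grid[OF assms(2)]] by (simp add: through_piece_def)
qed (auto simp: through_piece_def)

lemma is_hom_overlap_piece:
  "p \<in> collapse_preimage R \<Longrightarrow> is_hom ms (spread_rep R) (spread_rep (piece p) :: 'a rep) (overlap_map R (piece p))"
  using component_preimage_up[OF spread_R] component_preimage_down[OF spread_R]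
  by (intro is_hom_overlap_map) blast+

lemma is_hom_through_piece:
  assumes p: "p \<in> collapse_preimage R"
  shows "is_hom ms (spread_rep (piece p)) (spread_rep S :: 'a rep) (through_piece (piece p))"
  unfolding is_hom_def
proof (intro conjI ballI impI)
  let ?K = "piece p" and ?v = "through_piece (piece p)"
  have KR: "?K \<subseteq> collapse_preimage R"
    using conn_component_subset[OF p] .
  fix x y assume xg: "x \<in> grid ms" and yg: "y \<in> grid ms" and le: "le_pt x y"
  have cl: "?v y * rmap (spread_rep ?K) x y \<in> carrier_mat (spread_dim S y) (spread_dim ?K x)"
    and cr: "rmap (spread_rep S) x y * ?v x \<in> carrier_mat (spread_dim S y) (spread_dim ?K x)"
    using mult_carrier_mat through_piece_carrier[OF KR] rmap_spread_rep_carrier xg yg by blast+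
  show "?v y * rmap (spread_rep ?K) x y = rmap (spread_rep S) x y * ?v x"
  proof (cases "x \<in> ?K \<and> y \<in> S")
    case False
    then show ?thesis
      using cl cr by (intro carrier_mat_empty_eq) auto
  next
    case True
    let ?tx = "collapse x" and ?ty = "collapse y"
    have txg: "?tx \<in> grid ms" and tyg: "?ty \<in> grid ms"
      using collapse_grid xg yg by blast+
    have txR: "?tx \<in> R"
      using True KR by (auto simp: collapse_preimage_def)
    have tyS: "?ty \<in> S" and txS: "?tx \<in> S \<longleftrightarrow> x \<in> S"
      using True S_mem_collapse_iff xg yg by blast+
    have "y \<in> ?K \<longleftrightarrow> ?ty \<in> R"
      using True conn_component_closed[of x _ p y] comparable_if_le_pt(1)[OF le] p yg
        conn_component_subset[OF p] by (auto simp: collapse_preimage_def)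
    moreover have "g ?ty * rmap (spread_rep R) ?tx ?ty = rmap (spread_rep S) ?tx ?ty * g ?tx"
      using g_commute[OF txg tyg collapse_mono[OF xg yg le]] .
    ultimately show ?thesis
      using True txR tyS txS g_carrier[OF txg] g_carrier[OF tyg]
      by (cases "y \<in> ?K"; cases "x \<in> S") (auto simp: through_piece_def mult_carrier_mat_inner_0)
  qed
qed (use through_piece_carrier conn_component_subset[OF p] in auto)

lemma through_piece_factor:
  assumes p: "p \<in> collapse_preimage R" and x: "x \<in> grid ms" "x \<in> piece p"
  shows "through_piece (piece p) x * overlap_map R (piece p) x = g x"
proof (cases "x \<in> R \<and> x \<in> S")
  case True
  have "collapse x \<in> R"
    using x(2) conn_component_subset[OF p] by (auto simp: collapse_preimage_def)
  then show ?thesis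
    using True x g_collapse_eq[OF x(1)] g_carrier[OF collapse_grid[OF x(1)]] S_mem_collapse_iff[OF x(1)]
    by (simp add: through_piece_def overlap_map_def)
next
  case False
  have "through_piece (piece p) x * overlap_map R (piece p) x \<in> carrier_mat (spread_dim S x) (spread_dim R x)"
    by (rule mult_carrier_mat[OF through_piece_carrier[OF conn_component_subset[OF p] x(1)] overlap_map_carrier])
  then show ?thesis
    using False g_carrier[OF x(1)] by (intro carrier_mat_empty_eq) auto
qed

lemma glue_eq_piece:
  fixes C :: "'a rep"
  assumes p: "p \<in> collapse_preimage R" and x: "x \<in> grid ms"
    and H: "is_hom ms (spread_rep (piece p)) C (H (piece p))"
    and in_piece: "x \<in> collapse_preimage R \<longrightarrow> x \<in> piece p"
  shows "glue R C H x = H (piece p) x * overlap_map R (piece p) x"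
proof (cases "x \<in> collapse_preimage R")
  case True
  then show ?thesis
    using conn_component_eq in_piece by (simp add: glue_def)
next
  case False
  then have "x \<notin> piece p"
    using conn_component_subset[OF p] by blast
  then have "H (piece p) x \<in> carrier_mat (rdim C x) 0" "overlap_map R (piece p) x \<in> carrier_mat 0 (spread_dim R x)"
    using is_hom_carrier[OF H x] overlap_map_carrier[of R "piece p" x] by simp_all
  then have "H (piece p) x * overlap_map R (piece p) x = 0\<^sub>m (rdim C x) (spread_dim R x)"
    by (rule mult_carrier_mat_inner_0)
  with False show ?thesis
    by (simp add: glue_def)
qed

lemma is_hom_through_overlap:
  fixes C :: "'a rep"
  assumes C: "is_rep ms C" and p: "p \<in> collapse_preimage R"
    and H: "is_hom ms (spread_rep (piece p)) C Hp"
  shows "is_hom ms (spread_rep R) C (\<lambda>x. Hp x * overlap_map R (piece p) x)"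
  using is_hom_comp[OF is_rep_spread_rep[OF spread_R] is_rep_spread_rep[OF spread_component_preimage[OF spread_R p]]
      C H is_hom_overlap_piece[OF p]] .

lemma is_hom_glue:
  fixes C :: "'a rep"
  assumes C: "is_rep ms C"
    and H: "\<And>p. p \<in> collapse_preimage R \<Longrightarrow> is_hom ms (spread_rep (piece p)) C (H (piece p))"
  shows "is_hom ms (spread_rep R) C (glue R C H)"
  unfolding is_hom_def
proof (intro conjI ballI impI)
  fix x assume x: "x \<in> grid ms"
  show "glue R C H x \<in> carrier_mat (rdim C x) (rdim (spread_rep R) x)"
    using is_hom_carrier[OF is_hom_through_overlap[OF C _ H] x] by (simp add: glue_def)
next
  fix x y assume x: "x \<in> grid ms" and y: "y \<in> grid ms" and le: "le_pt x y"
  show "glue R C H y * rmap (spread_rep R) x y = rmap C x y * glue R C H x"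
  proof (cases "x \<in> collapse_preimage R \<or> y \<in> collapse_preimage R")
    case in_preimage: True
    have "\<exists>p \<in> collapse_preimage R. (x \<in> collapse_preimage R \<longrightarrow> x \<in> piece p) \<and>
        (y \<in> collapse_preimage R \<longrightarrow> y \<in> piece p)"
    proof (cases "x \<in> collapse_preimage R")
      case True
      then show ?thesis
        using conn_component_closed[OF self_in_conn_component _ comparable_if_le_pt(1)[OF le] True]
          self_in_conn_component by blast
    next
      case False
      then show ?thesis
        using in_preimage self_in_conn_component by blast
    qed
    then obtain p where p: "p \<in> collapse_preimage R"
      and xp: "x \<in> collapse_preimage R \<longrightarrow> x \<in> piece p" and yp: "y \<in> collapse_preimage R \<longrightarrow> y \<in> piece p"
      by blast
    have "glue R C H x = H (piece p) x * overlap_map R (piece p) x"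
      "glue R C H y = H (piece p) y * overlap_map R (piece p) y"
      using glue_eq_piece[where H = H, OF p x H[OF p] xp] glue_eq_piece[where H = H, OF p y H[OF p] yp] .
    then show ?thesis
      using is_hom_commute[OF is_hom_through_overlap[OF C p H[OF p]] x y le] by simp
  next
    case False
    then show ?thesis
      using left_mult_zero_mat[OF rmap_spread_rep_carrier[of R x y]] right_mult_zero_mat[OF is_rep_carrier[OF C x y le]]
      by (simp add: glue_def)
  qed
qed

lemma glue_lift:
  fixes C :: "'a rep"
  assumes \<rho>: "is_hom ms C (spread_rep S) \<rho>"
    and H: "\<And>p. p \<in> collapse_preimage R \<Longrightarrow> is_hom ms (spread_rep (piece p)) C (H (piece p))"
    and lift: "\<And>p x. p \<in> collapse_preimage R \<Longrightarrow> x \<in> grid ms \<Longrightarrow> \<rho> x * H (piece p) x = through_piece (piece p) x"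
    and x: "x \<in> grid ms"
  shows "\<rho> x * glue R C H x = g x"
proof (cases "x \<in> collapse_preimage R")
  case True
  have "\<rho> x * (H (piece x) x * overlap_map R (piece x) x) = (\<rho> x * H (piece x) x) * overlap_map R (piece x) x"
    using is_hom_carrier[OF \<rho> x, simplified] is_hom_carrier[OF H[OF True] x, simplified] overlap_map_carrier
    by (rule assoc_mult_mat[symmetric])
  then show ?thesis
    using True lift[OF True x] through_piece_factor[OF True x self_in_conn_component]
    by (simp add: glue_def)
next
  case False
  then show ?thesis
    using is_hom_carrier[OF \<rho> x] g_zero_off_preimage[OF x] x
    by (simp add: glue_def collapse_preimage_def)
qed

lemma hom_comp_glue_zero:
  fixes C :: "'a rep"
  assumes C: "is_rep ms C" and not_sat: "\<not> saturated R"
    and H: "\<And>p. p \<in> collapse_preimage R \<Longrightarrow> is_hom ms (spread_rep (piece p)) C (H (piece p))"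
    and \<theta>: "is_hom ms C (spread_rep R) \<theta>" and x: "x \<in> grid ms"
  shows "\<theta> x * glue R C H x = 0\<^sub>m (spread_dim R x) (spread_dim R x)"
proof (cases "x \<in> collapse_preimage R")
  case True
  have K: "spread ms (piece x)" and "piece x \<noteq> R"
    using spread_component_preimage[OF spread_R True] saturated_component_preimage[OF True] not_sat
    by metis+
  have "is_hom ms (spread_rep (piece x)) (spread_rep R) (\<lambda>y. \<theta> y * H (piece x) y)"
    using is_hom_comp[OF is_rep_spread_rep[OF K] C is_rep_spread_rep[OF spread_R] \<theta> H[OF True]] .
  from hom_spread_rep_round_trip_zero[OF spread_R K _ is_hom_overlap_piece[OF True] this x]
  have "(\<theta> x * H (piece x) x) * overlap_map R (piece x) x = 0\<^sub>m (spread_dim R x) (spread_dim R x)"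
    using \<open>piece x \<noteq> R\<close> by simp
  moreover have "\<theta> x * (H (piece x) x * overlap_map R (piece x) x) = (\<theta> x * H (piece x) x) * overlap_map R (piece x) x"
    using is_hom_carrier[OF \<theta> x, simplified] is_hom_carrier[OF H[OF True] x, simplified] overlap_map_carrier
    by (rule assoc_mult_mat[symmetric])
  ultimately show ?thesis
    using True by (simp add: glue_def)
next
  case False
  then show ?thesis
    using is_hom_carrier[OF \<theta> x] by (simp add: glue_def)
qed

lemma ex_lift_annihilated:
  fixes C :: "'a rep" and \<rho> :: "nat list \<Rightarrow> 'a mat"
  assumes C: "is_rep ms C" and \<rho>: "is_hom ms C (spread_rep S) \<rho>" and not_sat: "\<not> saturated R"
    and lift: "\<forall>K f. spread ms K \<and> K \<noteq> S \<and> is_hom ms (spread_rep K) (spread_rep S) f \<longrightarrow>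
      (\<exists>h. is_hom ms (spread_rep K) C h \<and> (\<forall>x\<in>grid ms. \<rho> x * h x = f x))"
  obtains h where "is_hom ms (spread_rep R) C h" "\<And>x. x \<in> grid ms \<Longrightarrow> \<rho> x * h x = g x"
    "\<And>\<theta> x. is_hom ms C (spread_rep R) \<theta> \<Longrightarrow> x \<in> grid ms \<Longrightarrow> \<theta> x * h x = 0\<^sub>m (spread_dim R x) (spread_dim R x)"
proof -
  have lift_piece: "\<exists>h. is_hom ms (spread_rep (piece p)) C h \<and> (\<forall>x\<in>grid ms. \<rho> x * h x = through_piece (piece p) x)"
    if p: "p \<in> collapse_preimage R" for p
  proof -
    have "spread ms (piece p)" "piece p \<noteq> S"
      using spread_component_preimage[OF spread_R p] component_preimage_eq_S[OF spread_R p] not_sat S_saturated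
      by auto
    then show ?thesis
      using lift is_hom_through_piece[OF p] by blast
  qed
  define H where "H K = (SOME h. is_hom ms (spread_rep K) C h \<and> (\<forall>x\<in>grid ms. \<rho> x * h x = through_piece K x))"
    for K
  have "is_hom ms (spread_rep (piece p)) C (H (piece p)) \<and>
      (\<forall>x\<in>grid ms. \<rho> x * H (piece p) x = through_piece (piece p) x)" if "p \<in> collapse_preimage R" for p
    unfolding H_def using lift_piece[OF that] by (rule someI_ex)
  then have H: "\<And>p. p \<in> collapse_preimage R \<Longrightarrow> is_hom ms (spread_rep (piece p)) C (H (piece p))"
    and H_lift: "\<And>p x. p \<in> collapse_preimage R \<Longrightarrow> x \<in> grid ms \<Longrightarrow> \<rho> x * H (piece p) x = through_piece (piece p) x"
    by blast+
  show ?thesis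
  proof (rule that)
    show "is_hom ms (spread_rep R) C (glue R C H)"
      using is_hom_glue[OF C H] .
    show "\<rho> x * glue R C H x = g x" if "x \<in> grid ms" for x
      using glue_lift[OF \<rho> H H_lift that] .
    show "\<theta> x * glue R C H x = 0\<^sub>m (spread_dim R x) (spread_dim R x)"
      if "is_hom ms C (spread_rep R) \<theta>" "x \<in> grid ms" for \<theta> x
      using hom_comp_glue_zero[OF C not_sat H that] .
  qed
qed

end

lemma summand_shift_closed:
  fixes C :: "'a :: field rep" and \<rho> :: "nat list \<Rightarrow> 'a mat"
  assumes ms: "ms \<noteq> []" and S: "spread ms S"
    and appr: "min_spread_rad_approx ms (spread_rep S) C \<rho>" and R: "spread ms R"
    and summand: "direct_summand ms (spread_rep R) C"
  shows "shift_closed ms (Qcoords ms S) R"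
proof (rule ccontr)
  interpret spread_setting ms S
    by (rule spread_settingI[OF ms S])
  assume "\<not> shift_closed ms (Qcoords ms S) R"
  then have not_sat: "\<not> saturated R"
    using shift_closed_iff_saturated by blast
  have C: "is_rep ms C" and \<rho>: "is_hom ms C (spread_rep S) \<rho>" and rm: "right_minimal ms C (spread_rep S) \<rho>"
    and lift_rad: "\<And>A f. in_C ms A \<Longrightarrow> is_hom ms A (spread_rep S) f \<Longrightarrow> in_rad ms A (spread_rep S) f \<Longrightarrow>
      \<exists>h. is_hom ms A C h \<and> (\<forall>x\<in>grid ms. \<rho> x * h x = f x)"
    using appr unfolding min_spread_rad_approx_def in_C_def by blast+
  have lift: "\<forall>K f. spread ms K \<and> K \<noteq> S \<and> is_hom ms (spread_rep K) (spread_rep S) f \<longrightarrow>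
      (\<exists>h. is_hom ms (spread_rep K) C h \<and> (\<forall>x\<in>grid ms. \<rho> x * h x = f x))"
    using lift_rad in_C_spread_rep in_rad_spread_rep[OF _ S] by blast
  let ?V = "spread_rep R :: 'a rep"
  have V: "is_rep ms ?V"
    using is_rep_spread_rep[OF R] .
  obtain \<iota> \<theta> where \<iota>: "is_hom ms ?V C \<iota>" and \<theta>: "is_hom ms C ?V \<theta>"
    and \<theta>\<iota>: "\<And>x. x \<in> grid ms \<Longrightarrow> \<theta> x * \<iota> x = 1\<^sub>m (rdim ?V x)"
    using direct_summand_retraction[OF V C summand] by blast
  define g where "g x = \<rho> x * \<iota> x" for x
  interpret hom_into_spread ms S R g
    using is_hom_comp[OF V C is_rep_spread_rep[OF S] \<rho> \<iota>] unfolding g_def[abs_def]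
    by (intro hom_into_spread.intro spread_settingI ms S hom_into_spread_axioms.intro R)
  obtain h where h: "is_hom ms ?V C h" and \<rho>h: "\<And>x. x \<in> grid ms \<Longrightarrow> \<rho> x * h x = \<rho> x * \<iota> x"
    and \<theta>h: "\<And>x. x \<in> grid ms \<Longrightarrow> \<theta> x * h x = 0\<^sub>m (rdim ?V x) (rdim ?V x)"
    using ex_lift_annihilated[OF C \<rho> not_sat lift] \<theta> unfolding g_def by (metis rdim_spread_rep)
  obtain x0 where "x0 \<in> R"
    using R by (auto simp: spread_def)
  then have "x0 \<in> grid ms" "0 < rdim ?V x0"
    using spread_subset_grid[OF R] by auto
  then show False
    using right_minimal_no_annihilated_lift[OF rm C V \<rho> \<iota> \<theta> \<theta>\<iota> h \<rho>h \<theta>h] by blast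
qed

theorem mainTheorem16:
  fixes ms :: "nat list" and S :: "nat list set"
  assumes "ms \<noteq> []" and "\<forall>i<length ms. 0 < ms ! i"
    and "spread ms S"
  shows "minimals S \<subseteq> Qset ms S \<and> cover ms S \<subseteq> Qset ms S \<and>
    (\<forall>(C :: 'a::field rep) \<rho> R. min_spread_rad_approx ms (spread_rep S) C \<rho> \<and> spread ms R \<and>
        direct_summand ms (spread_rep R) C \<longrightarrow>
        minimals R \<subseteq> Qset ms S \<and> cover ms R \<subseteq> Qset ms S)"
proof -
  interpret spread_setting ms S
    using assms(1,3) by (rule spread_settingI)
  have "minimals S \<subseteq> Qset ms S \<and> cover ms S \<subseteq> Qset ms S"
    using shift_closed_Qset[OF assms(1) S_subset_grid S_shift_closed] .
  moreover have "minimals R \<subseteq> Qset ms S \<and> cover ms R \<subseteq> Qset ms S"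
    if "min_spread_rad_approx ms (spread_rep S) C \<rho>" "spread ms R" "direct_summand ms (spread_rep R) C"
    for C :: "'a rep" and \<rho> R
    using shift_closed_Qset[OF assms(1) spread_subset_grid[OF that(2)] summand_shift_closed[OF assms(1,3) that]] .
  ultimately show ?thesis
    by blast
qed

end
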